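(* Let $(\tau,y'_1,\dots,y'_\tau)\in\mathcal{G}_{\zeta,C_1}$ and $2\le\ell\le\tau$ with $|y'_\ell-y'_{\ell-1}|\le A_n\sqrt n$. If $x\in G_\ell$ and $\varepsilon_n n\le n_3\le n$, then $$p_{n_3}(x',y'_\ell)=(1+o(1))\,p_{n_3}(u',y'_\ell)\quad\text{for all }x'\in\mathbf{K}+xN\text{ and all }u'\in\mathbb{T}_N+xN,$$ with the $o(1)$ term (as $N\to\infty$) uniform in $x'$ and $u'$.
   Context: Setup: $d\ge3$. $(Y_t)$ lazy simple random walk on $\mathbb{Z}^d$ (stays put w.p. $1/2$, otherwise moves to each neighbour w.p. $1/(4d)$), $p_t(x,y)=\mathbf{P}_x[Y_t=y]$, $|\cdot|$ Euclidean norm. $\mathbb{T}_N=[-N/2,N/2)^d\cap\mathbb{Z}^d$, $\varphi$ reduction mod $N$, $\tau_{\mathbf{x}}(\mathbf{y})=\varphi(\mathbf{y}+\mathbf{x})$; for $\mathbf{A}\subset\mathbb{T}_N$, $\mathbf{A}+xN=\{\mathbf{a}+xN:\mathbf{a}\in\mathbf{A}\}$. $L=mN$, $L^2/N^d\to A\in(0,\infty)$. Fix $2<\delta<d$ with $2\delta>d^2/(d-1)$, $n=\lfloor N^\delta\rfloor$, $0<\zeta<\delta/d$ with $\zeta(d-2)>d-\delta$. Fix $R$, $g$ with $g(N)\to\infty$, $K\subset B_R(o)$, $\mathbf{x}$ with $\tau_{\mathbf{x}}\varphi(B_R(o))\cap\varphi(B_{g(N)}(o))=\emptyset$; $\mathbf{K}=\tau_{\mathbf{x}}\varphi(K)$,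 $\mathbf{x}_0\in\mathbf{K}$; $B(\mathbf{x}_0,r)=\varphi(\{y:|y-\mathbf{x}_0|<r\})$. $f(n)=C_1\sqrt{\log N}$ for a constant $C_1>0$. $\mathcal{G}_{\zeta,C_1}$: tuples $(\tau,y'_1,\dots,y'_\tau)$ with $y'_0:=o$, (a) $(\sqrt{\log\log n})^{-1}N^d/n\le\tau\le(\log N)N^d/n$; (b) $y'_\ell\in(-L,L)^d$ for $1\le\ell<\tau$, $y'_\tau\notin(-L,L)^d$; (c) $\varphi(y'_\ell)\notin B(\mathbf{x}_0,N^\zeta)$ for $1\le\ell\le\tau$; (d) $|y'_\ell-y'_{\ell-1}|\le f(n)\sqrt n$ for $1\le\ell\le\tau$. Further: $A_n=10\log\log n$, $\varepsilon_n=(10\log\log n)^{-1}$, and $G_\ell=\{x\in\mathbb{Z}^d:|y'_{\ell-1}-xN|\le A_n^2\sqrt n,\ |xN-y'_\ell|\le A_n^2\sqrt n\}$. *)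

theory Defs
  imports "HOL-Analysis.Analysis"
begin

text \<open>Points of Z^d are int vectors indexed by a finite type 'd, with d = CARD('d).\<close>

definition rv :: "int^'d \<Rightarrow> real^'d" where
  "rv x = (\<chi> i. real_of_int (x $ i))"

definition znorm :: "int^'d \<Rightarrow> real" where
  "znorm x = norm (rv x)"

definition unitv :: "'d \<Rightarrow> int^'d" where
  "unitv k = (\<chi> i. if i = k then 1 else 0)"

text \<open>Lazy simple random walk: p_t(x,y) = P_x[Y_t = y], via the Markov recursion
  p_{t+1}(x,y) = sum_z P(x,z) p_t(z,y).\<close>
fun lazy_p :: "nat \<Rightarrow> int^'d \<Rightarrow> int^'d \<Rightarrow> real" where
  "lazy_p 0 x y = (if x = y then 1 else 0)"
| "lazy_p (Suc t) x y = lazy_p t x y / 2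
     + (\<Sum>i\<in>UNIV. lazy_p t (x + unitv i) y + lazy_p t (x - unitv i) y) / (4 * real CARD('d))"

definition torus :: "nat \<Rightarrow> (int^'d) set" where
  "torus N = {y. \<forall>i. - real N / 2 \<le> real_of_int (y $ i) \<and> real_of_int (y $ i) < real N / 2}"

definition phi :: "nat \<Rightarrow> int^'d \<Rightarrow> int^'d" where
  "phi N y = (\<chi> i. (y $ i + int (N div 2)) mod int N - int (N div 2))"

definition tshift :: "nat \<Rightarrow> int^'d \<Rightarrow> int^'d \<Rightarrow> int^'d" where
  "tshift N xx y = phi N (y + xx)"

definition zball :: "int^'d \<Rightarrow> real \<Rightarrow> (int^'d) set" where
  "zball c r = {y. znorm (y - c) < r}"

definition tball :: "nat \<Rightarrow> int^'d \<Rightarrow> real \<Rightarrow> (int^'d) set" where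
  "tball N x0 r = phi N ` zball x0 r"

definition shiftset :: "(int^'d) set \<Rightarrow> int^'d \<Rightarrow> nat \<Rightarrow> (int^'d) set" where
  "shiftset S x N = (\<lambda>a. a + int N *s x) ` S"

definition nN :: "real \<Rightarrow> nat \<Rightarrow> nat" where
  "nN \<delta> N = nat \<lfloor>real N powr \<delta>\<rfloor>"

definition An :: "nat \<Rightarrow> real" where
  "An n = 10 * ln (ln (real n))"

definition epsn :: "nat \<Rightarrow> real" where
  "epsn n = 1 / (10 * ln (ln (real n)))"

definition fN :: "real \<Rightarrow> nat \<Rightarrow> real" where
  "fN C1 N = C1 * sqrt (ln (real N))"

definition openbox :: "int \<Rightarrow> (int^'d) set" where
  "openbox L = {y. \<forall>i. \<bar>y $ i\<bar> < L}"

text \<open>The set G_{zeta,C1}: tuples (tau, y'_1..y'_tau), encoded as (tau, ys) with ys 0 = o.\<close>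
definition goodG :: "nat \<Rightarrow> nat \<Rightarrow> real \<Rightarrow> real \<Rightarrow> real \<Rightarrow> int^'d \<Rightarrow> (nat \<times> (nat \<Rightarrow> int^'d)) set" where
  "goodG N L \<delta> \<zeta> C1 x0 = {(\<tau>, ys). ys 0 = 0 \<and>
     (let n = nN \<delta> N in
       real N ^ CARD('d) / (sqrt (ln (ln (real n))) * real n) \<le> real \<tau> \<and>
       real \<tau> \<le> ln (real N) * real N ^ CARD('d) / real n \<and>
       (\<forall>l\<in>{1..<\<tau>}. ys l \<in> openbox (int L)) \<and> ys \<tau> \<notin> openbox (int L) \<and>
       (\<forall>l\<in>{1..\<tau>}. phi N (ys l) \<notin> tball N x0 (real N powr \<zeta>)) \<and>
       (\<forall>l\<in>{1..\<tau>}. znorm (ys l - ys (l - 1)) \<le> fN C1 N * sqrt (real n)))}"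

definition Gl :: "nat \<Rightarrow> nat \<Rightarrow> (nat \<Rightarrow> int^'d) \<Rightarrow> nat \<Rightarrow> (int^'d) set" where
  "Gl N n ys l = {x. znorm (ys (l - 1) - int N *s x) \<le> (An n)^2 * sqrt (real n) \<and>
                    znorm (int N *s x - ys l) \<le> (An n)^2 * sqrt (real n)}"

end

theory Submission
  imports Defs "HOL-Analysis.Harmonic_Numbers" "HOL-Real_Asymp.Real_Asymp"
begin

(* The ratio comes from a discrete Harnack inequality. With y = y'_l, the displacements x' - y and
   u' - y lie in a box of radius D = N + A_n^2 sqrt n, and inside that box a unit step in any
   coordinate changes the kernel p_t(., 0) by a factor 1 + O(theta), where theta = O(D / t) plus an
   exponentially small term. Chaining unit steps along an l1-path of length at most 2dN gives the
   factor exp (2 d N theta), which tends to 1 because N <= (2n)^(1/delta) with delta > 2 and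
   t >= n / (10 log log n).

   The one-step estimate comes from conditioning on the number k of moves made in coordinate i:
   given k, that coordinate performs a one-dimensional lazy walk with kernel binom(2k, k+z) / 4^k,
   whose consecutive ratios are 1 + O((|z| + 1) / k). Small k carry exponentially small binomial
   weight, which is absorbed into the main term by a polynomial lower bound on the kernel in the
   box, proved by splitting off one coordinate at a time. *)

section \<open>Binomial weights\<close>

fun binomial_weight :: "real \<Rightarrow> nat \<Rightarrow> nat \<Rightarrow> real" where
  "binomial_weight q 0 k = (if k = 0 then 1 else 0)"
| "binomial_weight q (Suc t) k
     = (1-q) * binomial_weight q t k + (if k = 0 then 0 else q * binomial_weight q t (k-1))"

lemma binomial_weight_eq_0: "t < k \<Longrightarrow> binomial_weight q t k = 0"
  by (induction t arbitrary: k) auto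

lemma binomial_weight_nonneg: "0 \<le> q \<Longrightarrow> q \<le> 1 \<Longrightarrow> 0 \<le> binomial_weight q t k"
  by (induction t arbitrary: k) auto

lemma sum_binomial_weight_Suc:
  "(\<Sum>k\<le>Suc t. binomial_weight q (Suc t) k * f k)
     = (1-q) * (\<Sum>k\<le>t. binomial_weight q t k * f k) + q * (\<Sum>k\<le>t. binomial_weight q t k * f (Suc k))"
proof -
  have "(\<Sum>k\<le>Suc t. binomial_weight q (Suc t) k * f k) = (\<Sum>k\<le>Suc t. (1-q) * binomial_weight q t k * f k)
      + (\<Sum>k\<le>Suc t. (if k = 0 then 0 else q * binomial_weight q t (k-1)) * f k)"
    by (subst sum.distrib[symmetric]) (simp add: distrib_right del: sum.atMost_Suc)
  also have "(\<Sum>k\<le>Suc t. (1-q) * binomial_weight q t k * f k) = (1-q) * (\<Sum>k\<le>t. binomial_weight q t k * f k)"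
    by (simp add: binomial_weight_eq_0 sum_distrib_left mult.assoc)
  also have "(\<Sum>k\<le>Suc t. (if k = 0 then 0 else q * binomial_weight q t (k-1)) * f k)
      = q * (\<Sum>k\<le>t. binomial_weight q t k * f (Suc k))"
    by (subst sum.atMost_Suc_shift) (simp add: sum_distrib_left mult.assoc)
  finally show ?thesis .
qed

lemma sum_binomial_weight_powers: "(\<Sum>k\<le>t. binomial_weight q t k * (a^k * b^(t-k))) = ((1-q)*b + q*a)^t"
proof (induction t)
  case 0 then show ?case by simp
next
  case (Suc t)
  have "(\<Sum>k\<le>Suc t. binomial_weight q (Suc t) k * (a^k * b^(Suc t-k))) =
     (1-q) * (\<Sum>k\<le>t. binomial_weight q t k * (a^k * b^(Suc t - k))) + q * (\<Sum>k\<le>t. binomial_weight q t k * (a^Suc k * b^(Suc t - Suc k)))"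
    by (rule sum_binomial_weight_Suc)
  also have "(\<Sum>k\<le>t. binomial_weight q t k * (a^k * b^(Suc t - k))) = b * (\<Sum>k\<le>t. binomial_weight q t k * (a^k * b^(t - k)))"
    by (auto simp: sum_distrib_left Suc_diff_le intro!: sum.cong)
  also have "(\<Sum>k\<le>t. binomial_weight q t k * (a^Suc k * b^(Suc t - Suc k))) = a * (\<Sum>k\<le>t. binomial_weight q t k * (a^k * b^(t - k)))"
    by (auto simp: sum_distrib_left intro!: sum.cong)
  finally show ?case using Suc by (simp add: algebra_simps)
qed

lemma sum_binomial_weight: "(\<Sum>k\<le>t. binomial_weight q t k) = 1"
  using sum_binomial_weight_powers[of q t 1 1] by simp

(* Markov's inequality for the generating function of the binomial distribution. *)
lemma sum_binomial_weight_le_moment: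
  assumes q: "0 \<le> q" "q \<le> 1" and S: "S \<subseteq> {..t}" and ab: "0 \<le> a" "0 \<le> b" "0 \<le> c"
    and one: "\<And>k. k \<in> S \<Longrightarrow> 1 \<le> c * (a^k * b^(t-k))"
  shows "(\<Sum>k\<in>S. binomial_weight q t k) \<le> c * ((1-q)*b + q*a)^t"
proof -
  have "(\<Sum>k\<in>S. binomial_weight q t k) \<le> (\<Sum>k\<in>S. binomial_weight q t k * (c * (a^k * b^(t-k))))"
    by (intro sum_mono) (metis mult.right_neutral mult_left_mono one binomial_weight_nonneg[OF q])
  also have "\<dots> \<le> (\<Sum>k\<le>t. binomial_weight q t k * (c * (a^k * b^(t-k))))"
    using S binomial_weight_nonneg[OF q] ab by (intro sum_mono2) auto
  also have "\<dots> = c * (\<Sum>k\<le>t. binomial_weight q t k * (a^k * b^(t-k)))" by (simp add: sum_distrib_left ac_simps)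
  also have "\<dots> = c * ((1-q)*b + q*a)^t" by (simp add: sum_binomial_weight_powers)
  finally show ?thesis .
qed

lemma power_one_minus_le_exp: "0 \<le> x \<Longrightarrow> x \<le> 1 \<Longrightarrow> (1 - x)^t \<le> exp (- x * real t)"
proof -
  assume x: "0 \<le> x" "x \<le> 1"
  have "(1 - x)^t \<le> exp (-x)^t" using x by (intro power_mono) (auto simp: exp_ge_add_one_self[of "-x", simplified])
  also have "\<dots> = exp (- x * real t)" by (simp add: exp_of_nat_mult[symmetric] mult.commute)
  finally show ?thesis .
qed

lemma binomial_weight_lower_tail:
  assumes q: "0 \<le> q" "q \<le> 1"
  shows "(\<Sum>k\<in>{k. k \<le> t \<and> real k < q * real t / 2}. binomial_weight q t k)
           \<le> exp (-(1 - ln 2) * q * real t / 2)"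
proof -
  define c where "c = (2::real) powr (q * real t / 2)"
  have one: "1 \<le> c * ((1/2)^k * 1^(t-k))" if "k \<in> {k. k \<le> t \<and> real k < q * real t / 2}" for k
  proof -
    have "(1/2::real)^k = 1 / 2 powr (real k)" by (simp add: powr_realpow power_one_over)
    then have "c * ((1/2)^k * 1^(t-k)) = 2 powr (q * real t / 2) / 2 powr (real k)" by (simp add: c_def)
    also have "\<dots> = 2 powr (q * real t / 2 - real k)" by (simp add: powr_diff)
    finally have "c * ((1/2)^k * 1^(t-k)) = 2 powr (q * real t / 2 - real k)" .
    also have "\<dots> \<ge> 1" using that by (intro ge_one_powr_ge_zero) auto
    finally show ?thesis by simp
  qed
  have "(\<Sum>k\<in>{k. k \<le> t \<and> real k < q * real t / 2}. binomial_weight q t k) \<le> c * ((1-q)*1 + q*(1/2))^t"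
    by (rule sum_binomial_weight_le_moment[OF q _ _ _ _ one]) (auto simp: c_def)
  also have "(1-q)*1 + q*(1/2) = 1 - q/2" by simp
  also have "c * (1 - q/2)^t \<le> c * exp (- (q/2) * real t)"
    using q by (intro mult_left_mono power_one_minus_le_exp) (auto simp: c_def)
  also have "c * exp (- (q/2) * real t) = exp (-(1 - ln 2) * q * real t / 2)"
    by (simp add: c_def powr_def exp_add[symmetric] algebra_simps)
  finally show ?thesis .
qed

lemma binomial_weight_upper_tail:
  assumes q: "0 \<le> q" "q \<le> 1"
  shows "(\<Sum>k\<in>{k. k \<le> t \<and> real (t - k) < (1-q) * real t / 2}. binomial_weight q t k)
           \<le> exp (-(1 - ln 2) * (1-q) * real t / 2)"
proof -
  define c where "c = (2::real) powr ((1-q) * real t / 2)"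
  have one: "1 \<le> c * (1^k * (1/2)^(t-k))" if "k \<in> {k. k \<le> t \<and> real (t-k) < (1-q) * real t / 2}" for k
  proof -
    have "(1/2::real)^(t-k) = 1 / 2 powr (real (t-k))" by (simp add: powr_realpow power_one_over)
    then have "c * (1^k * (1/2)^(t-k)) = 2 powr ((1-q) * real t / 2) / 2 powr (real (t-k))" by (simp add: c_def)
    also have "\<dots> = 2 powr ((1-q) * real t / 2 - real (t-k))" by (simp add: powr_diff)
    finally have "c * (1^k * (1/2)^(t-k)) = 2 powr ((1-q) * real t / 2 - real (t-k))" .
    also have "\<dots> \<ge> 1" using that by (intro ge_one_powr_ge_zero) auto
    finally show ?thesis by simp
  qed
  have "(\<Sum>k\<in>{k. k \<le> t \<and> real (t-k) < (1-q) * real t / 2}. binomial_weight q t k) \<le> c * ((1-q)*(1/2) + q*1)^t"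
    by (rule sum_binomial_weight_le_moment[OF q _ _ _ _ one]) (auto simp: c_def)
  also have "(1-q)*(1/2) + q*1 = 1 - (1-q)/2" by (simp add: field_simps)
  also have "c * (1 - (1-q)/2)^t \<le> c * exp (- ((1-q)/2) * real t)"
    using q by (intro mult_left_mono power_one_minus_le_exp) (auto simp: c_def)
  also have "c * exp (- ((1-q)/2) * real t) = exp (-(1 - ln 2) * (1-q) * real t / 2)"
    by (simp add: c_def powr_def exp_add[symmetric] field_simps)
  finally show ?thesis .
qed

lemma binomial_weight_central_mass:
  assumes q: "0 \<le> q" "q \<le> 1" and Te: "exp (-(1 - ln 2) * T) \<le> 1/4"
    and Tq: "T \<le> q * real s / 2" and Tq': "q < 1 \<Longrightarrow> T \<le> (1 - q) * real s / 2"
  shows "1/2 \<le> (\<Sum>k\<in>{k. k \<le> s \<and> q * real s / 2 \<le> real k \<and> (1 - q) * real s / 2 \<le> real (s - k)}.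
                   binomial_weight q s k)"
proof -
  define G where "G = {k. k \<le> s \<and> q * real s / 2 \<le> real k \<and> (1 - q) * real s / 2 \<le> real (s - k)}"
  define Lo where "Lo = {k. k \<le> s \<and> real k < q * real s / 2}"
  define Up where "Up = {k. k \<le> s \<and> real (s - k) < (1 - q) * real s / 2}"
  let ?w = "binomial_weight q s"
  have exp_mono: "exp (-(1 - ln 2) * x / 2) \<le> 1/4" if "T \<le> x / 2" for x
  proof -
    have "(1 - ln 2) * T \<le> (1 - ln 2) * (x / 2)" using that ln_2_less_1 by (intro mult_left_mono) auto
    then have "-(1 - ln 2) * x / 2 \<le> -(1 - ln 2) * T" by (simp add: field_simps)
    then show ?thesis using Te by (meson exp_le_cancel_iff order_trans)
  qed
  have "sum ?w Lo \<le> exp (-(1 - ln 2) * (q * real s) / 2)"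
    unfolding Lo_def using binomial_weight_lower_tail[OF q] by (simp add: mult.assoc)
  then have Lo_le: "sum ?w Lo \<le> 1/4" using exp_mono[of "q * real s"] Tq by linarith
  have Up_le: "sum ?w Up \<le> 1/4"
  proof (cases "q < 1")
    case True
    have "sum ?w Up \<le> exp (-(1 - ln 2) * ((1 - q) * real s) / 2)"
      unfolding Up_def using binomial_weight_upper_tail[OF q] by (simp add: mult.assoc)
    then show ?thesis using exp_mono[of "(1 - q) * real s"] Tq'[OF True] by linarith
  next
    case False
    then have "Up = {}" using q by (auto simp: Up_def)
    then show ?thesis by simp
  qed
  have fin: "finite G" "finite Lo" "finite Up" by (auto simp: G_def Lo_def Up_def)
  have w0: "\<And>k. 0 \<le> ?w k" using binomial_weight_nonneg[OF q] by blast
  have "1 = sum ?w {..s}" by (simp add: sum_binomial_weight)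
  also have "\<dots> \<le> sum ?w (G \<union> Lo \<union> Up)"
    using fin w0 by (intro sum_mono2) (auto simp: G_def Lo_def Up_def)
  also have "\<dots> \<le> sum ?w G + sum ?w Lo + sum ?w Up"
    using fin w0 sum_Un[of "G \<union> Lo" Up ?w] sum_Un[of G Lo ?w]
      sum_nonneg[of "(G \<union> Lo) \<inter> Up" ?w] sum_nonneg[of "G \<inter> Lo" ?w] by auto
  finally show ?thesis using Lo_le Up_le by (simp add: G_def)
qed

section \<open>The one-dimensional lazy walk\<close>

(* A lazy step on Z has the law of B1 + B2 - 1 for independent fair bits, so k steps have the law
   of Binomial(2k, 1/2) - k. *)
definition walk1_p :: "nat \<Rightarrow> int \<Rightarrow> real" where
  "walk1_p k z = (if z < - int k then 0 else real ((2*k) choose nat (int k + z))) / 4^k"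

lemma walk1_p_nonneg: "0 \<le> walk1_p k z"
  by (simp add: walk1_p_def)

lemma walk1_p_le_1: "walk1_p k z \<le> 1"
proof -
  have "real ((2*k) choose nat (int k + z)) \<le> 2^(2*k)"
    using binomial_le_pow2[of "2*k" "nat (int k + z)"] by (metis of_nat_le_iff of_nat_numeral of_nat_power)
  also have "(2::real)^(2*k) = 4^k" by (simp add: power_mult)
  finally show ?thesis by (simp add: walk1_p_def)
qed

lemma abs_walk1_p_diff_le_1: "\<bar>walk1_p k x - walk1_p k y\<bar> \<le> 1"
  using walk1_p_nonneg[of k x] walk1_p_nonneg[of k y] walk1_p_le_1[of k x] walk1_p_le_1[of k y]
  by linarith

lemma walk1_p_Suc: "walk1_p (Suc k) z = walk1_p k z / 2 + (walk1_p k (z+1) + walk1_p k (z-1)) / 4"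
proof -
  consider "z < - int k - 1" | "z = - int k - 1" | "z \<ge> - int k" by linarith
  then show ?thesis
  proof cases
    case 1 then show ?thesis by (simp add: walk1_p_def)
  next
    case 2 then show ?thesis by (simp add: walk1_p_def)
  next
    case 3
    define m where "m = nat (int k + z)"
    have zm: "int k + z = int m" using 3 by (simp add: m_def)
    have e1: "nat (int (Suc k) + z) = Suc m" using zm by simp
    have e2: "nat (int k + (z+1)) = Suc m" using zm by simp
    have e3: "m \<ge> 1 \<Longrightarrow> nat (int k + (z-1)) = m - 1" using zm by simp
    have "(Suc (Suc (2*k)) choose Suc m) = (if m = 0 then 0 else 2*k choose (m - 1)) + 2 * (2*k choose m) + (2*k choose Suc m)"
      by (cases m) auto
    then have A: "real (2 * Suc k choose Suc m) = (if m = 0 then 0 else real (2*k choose (m - 1))) + 2 * real (2*k choose m) + real (2*k choose Suc m)"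
      by simp
    show ?thesis
    proof (cases "m = 0")
      case True
      then have "z = - int k" using zm by simp
      then show ?thesis using A True e1 e2 zm
        by (simp add: walk1_p_def m_def field_simps)
    next
      case False
      then have "\<not> (z - 1 < - int k)" using zm by simp
      then show ?thesis using A False e1 e2 e3 zm 3
        by (simp add: walk1_p_def m_def field_simps)
    qed
  qed
qed

lemma walk1_p_ratio_eq:
  assumes "\<bar>z\<bar> < int k"
  shows "walk1_p k (z+1) * (real_of_int (int k + z) + 1) = walk1_p k z * (real_of_int (int k - z))"
proof -
  define m where "m = nat (int k + z)"
  have zm: "int k + z = int m" using assms by (simp add: m_def)
  have m2: "m < 2*k" using assms zm by linarith
  have n1: "nat (int k + (z+1)) = Suc m" using zm by simp
  have A: "(2*k - m) * (2*k choose m) = Suc m * (2*k choose Suc m)"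
    using binomial_absorb_comp[of "2*k" m] binomial_absorption[of m "2*k"] by simp
  have A': "real (2*k - m) * real (2*k choose m) = real (Suc m) * real (2*k choose Suc m)"
    using A by (metis of_nat_mult)
  have r1: "real (2*k - m) = real_of_int (int k - z)" using zm m2 by simp
  have r2: "real (Suc m) = real_of_int (int k + z) + 1" using zm by simp
  have b1: "walk1_p k z = real (2*k choose m) / 4^k" using assms zm by (simp add: walk1_p_def m_def)
  have nz: "\<not> (z+1 < - int k)" using assms by linarith
  have b2: "walk1_p k (z+1) = real (2*k choose Suc m) / 4^k" using n1 nz by (simp add: walk1_p_def)
  have "walk1_p k (z+1) * (real_of_int (int k + z) + 1) = real (Suc m) * real (2*k choose Suc m) / 4^k"
    by (simp only: b2 r2[symmetric]) simp
  also have "\<dots> = real (2*k - m) * real (2*k choose m) / 4^k" by (simp only: A')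
  also have "\<dots> = walk1_p k z * real_of_int (int k - z)" by (simp only: b1 r1[symmetric]) simp
  finally show ?thesis .
qed

lemma walk1_p_ratio_le:
  assumes "2 * (\<bar>z\<bar> + 1) \<le> int k"
  shows "walk1_p k (z+1) \<le> (1 + 4 * (real_of_int \<bar>z\<bar> + 1) / real k) * walk1_p k z"
    and "walk1_p k z \<le> (1 + 4 * (real_of_int \<bar>z\<bar> + 1) / real k) * walk1_p k (z+1)"
proof -
  define \<eta> where "\<eta> = 4 * (real_of_int \<bar>z\<bar> + 1) / real k"
  define P where "P = real k + real_of_int z + 1"
  define Q where "Q = real k - real_of_int z"
  have E: "walk1_p k (z+1) * P = walk1_p k z * Q"
    using walk1_p_ratio_eq[of z k] assms by (simp add: P_def Q_def)
  have "real_of_int (2 * (\<bar>z\<bar> + 1)) \<le> real_of_int (int k)" using assms of_int_le_iff by blast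
  then have kk: "2 * (real_of_int \<bar>z\<bar> + 1) \<le> real k" by simp
  have k0: "real k > 0" using assms by simp
  have PQ: "real k / 2 \<le> P" "real k / 2 \<le> Q" using kk by (auto simp: P_def Q_def)
  have "\<eta> * (real k / 2) = 2 * (real_of_int \<bar>z\<bar> + 1)" using k0 by (simp add: \<eta>_def)
  moreover have "0 \<le> \<eta>" by (simp add: \<eta>_def)
  then have "\<eta> * (real k / 2) \<le> \<eta> * P" "\<eta> * (real k / 2) \<le> \<eta> * Q"
    using mult_left_mono PQ by blast+
  ultimately have QP: "Q \<le> (1 + \<eta>) * P" and PQ': "P \<le> (1 + \<eta>) * Q"
    by (simp_all add: P_def Q_def distrib_right)
  have "walk1_p k (z+1) * P = walk1_p k z * Q" by (rule E)
  also have "\<dots> \<le> walk1_p k z * ((1 + \<eta>) * P)" using QP walk1_p_nonneg by (rule mult_left_mono)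
  finally show "walk1_p k (z+1) \<le> (1 + \<eta>) * walk1_p k z"
    using PQ k0 by (simp add: mult.assoc mult.left_commute[of _ P] mult.commute[of _ "1 + \<eta>"])
  have "walk1_p k z * Q = walk1_p k (z+1) * P" by (rule E[symmetric])
  also have "\<dots> \<le> walk1_p k (z+1) * ((1 + \<eta>) * Q)" using PQ' walk1_p_nonneg by (rule mult_left_mono)
  finally show "walk1_p k z \<le> (1 + \<eta>) * walk1_p k (z+1)"
    using PQ k0 by (simp add: mult.assoc mult.left_commute[of _ Q] mult.commute[of _ "1 + \<eta>"])
qed

lemma walk1_p_increment:
  assumes "2 * (\<bar>z\<bar> + 1) \<le> int k" and eta: "4 * (real_of_int \<bar>z\<bar> + 1) / real k \<le> \<eta>"
  shows "\<bar>walk1_p k (z+1) - walk1_p k z\<bar> \<le> \<eta> * walk1_p k z"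
    and "\<bar>walk1_p k (z+1) - walk1_p k z\<bar> \<le> \<eta> * walk1_p k (z+1)"
proof -
  note r1 = walk1_p_ratio_le(1)[OF assms(1)] and r2 = walk1_p_ratio_le(2)[OF assms(1)]
  define e where "e = 4 * (real_of_int \<bar>z\<bar> + 1) / real k"
  have e0: "e \<ge> 0" by (simp add: e_def)
  have b: "walk1_p k z \<ge> 0" "walk1_p k (z+1) \<ge> 0" by (simp_all add: walk1_p_nonneg)
  have m1: "e * walk1_p k z \<le> \<eta> * walk1_p k z" "e * walk1_p k (z+1) \<le> \<eta> * walk1_p k (z+1)"
    unfolding e_def by (rule mult_right_mono[OF eta b(1)], rule mult_right_mono[OF eta b(2)])
  have u1: "walk1_p k (z+1) - walk1_p k z \<le> e * walk1_p k z" using r1 by (simp add: e_def algebra_simps)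
  have u2: "walk1_p k z - walk1_p k (z+1) \<le> e * walk1_p k (z+1)" using r2 by (simp add: e_def algebra_simps)
  have n1: "e * walk1_p k z \<le> \<eta> * walk1_p k z" using m1 by simp
  have et0: "0 \<le> \<eta>" using eta e0 unfolding e_def by linarith
  show "\<bar>walk1_p k (z+1) - walk1_p k z\<bar> \<le> \<eta> * walk1_p k z"
  proof (cases "walk1_p k (z+1) \<le> walk1_p k z")
    case True
    have "e * walk1_p k (z+1) \<le> e * walk1_p k z" using True e0 by (rule mult_left_mono)
    then show ?thesis using u2 n1 True by linarith
  next
    case False
    have "0 \<le> \<eta> * walk1_p k z" using et0 b by simp
    then show ?thesis using u1 n1 False by linarith
  qed
  show "\<bar>walk1_p k (z+1) - walk1_p k z\<bar> \<le> \<eta> * walk1_p k (z+1)"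
  proof (cases "walk1_p k z \<le> walk1_p k (z+1)")
    case True
    have "e * walk1_p k z \<le> e * walk1_p k (z+1)" using True e0 by (rule mult_left_mono)
    then show ?thesis using u1 m1(2) True by linarith
  next
    case False
    have "0 \<le> \<eta> * walk1_p k (z+1)" using et0 b by simp
    then show ?thesis using u2 m1(2) False by linarith
  qed
qed

lemma walk1_p_increment_large_k:
  assumes D0: "0 \<le> D" and zD: "\<bar>real_of_int z\<bar> \<le> D" and d1: "1 \<le> d"
    and tD: "4 * d * (D+1) \<le> real t" and kt: "real t / (2*d) \<le> real k"
  shows "\<bar>walk1_p k (z+1) - walk1_p k z\<bar> \<le> (8*d*(D+1) / real t) * walk1_p k z"
    and "\<bar>walk1_p k (z+1) - walk1_p k z\<bar> \<le> (8*d*(D+1) / real t) * walk1_p k (z+1)"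
proof -
  have "0 < 4 * d * (D+1)" using D0 d1 by simp
  then have t0: "real t > 0" using tD by linarith
  have "2 * (D+1) \<le> real t / (2*d)" using tD d1 by (simp add: field_simps)
  then have k2: "2 * (D+1) \<le> real k" using kt by linarith
  have a1: "real_of_int \<bar>z\<bar> \<le> D" using zD by simp
  have "real_of_int (2 * (\<bar>z\<bar> + 1)) \<le> real_of_int (int k)" using k2 a1 by simp
  then have c1: "2 * (\<bar>z\<bar> + 1) \<le> int k" by (simp only: of_int_le_iff)
  have kp: "real k > 0" using k2 D0 by (smt (verit))
  have "4 * (real_of_int \<bar>z\<bar> + 1) / real k \<le> 4 * (D+1) / real k"
    using a1 kp by (intro divide_right_mono) auto
  also have "\<dots> \<le> 4 * (D+1) / (real t / (2*d))"
    using kt D0 t0 d1 kp by (intro divide_left_mono) auto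
  also have "\<dots> = 8*d*(D+1) / real t" using d1 t0 by (simp add: field_simps)
  finally have \<eta>: "4 * (real_of_int \<bar>z\<bar> + 1) / real k \<le> 8*d*(D+1) / real t" .
  show "\<bar>walk1_p k (z+1) - walk1_p k z\<bar> \<le> (8*d*(D+1) / real t) * walk1_p k z"
    by (fact walk1_p_increment(1)[OF c1 \<eta>])
  show "\<bar>walk1_p k (z+1) - walk1_p k z\<bar> \<le> (8*d*(D+1) / real t) * walk1_p k (z+1)"
    by (fact walk1_p_increment(2)[OF c1 \<eta>])
qed

lemma walk1_p_minus: "walk1_p k (- z) = walk1_p k z"
proof (cases "\<bar>z\<bar> \<le> int k")
  case True
  then have "2*k - nat (int k + z) = nat (int k - z)" "nat (int k + z) \<le> 2*k" by linarith+
  then show ?thesis using True binomial_symmetric[of "nat (int k + z)" "2*k"]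
    by (auto simp: walk1_p_def abs_le_iff)
next
  case False
  then have "2*k < nat (int k + z) \<or> z < - int k" "2*k < nat (int k - z) \<or> - z < - int k" by linarith+
  then show ?thesis by (auto simp: walk1_p_def binomial_eq_0)
qed

lemma walk1_p_ge_walk1_p_0_div:
  assumes kD: "2*(D+1) \<le> real k"
  shows "real a \<le> D \<Longrightarrow> walk1_p k 0 / (1 + 4*(D+1)/real k)^a \<le> walk1_p k (int a)"
proof (induction a)
  case 0 then show ?case by simp
next
  case (Suc a)
  define \<eta> where "\<eta> = 4*(D+1)/real k"
  have aD: "real a + 1 \<le> D" using Suc.prems by simp
  then have k0: "real k > 0" using kD by (smt (verit) of_nat_0_le_iff)
  have \<eta>0: "\<eta> \<ge> 0" using k0 aD by (simp add: \<eta>_def)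
  have "real (2 * (a + 1)) \<le> real k" using kD aD by simp
  then have c1: "2 * (\<bar>int a\<bar> + 1) \<le> int k" by (simp only: of_nat_le_iff) auto
  have "walk1_p k (int a) \<le> (1 + 4 * (real_of_int \<bar>int a\<bar> + 1) / real k) * walk1_p k (int a + 1)"
    by (rule walk1_p_ratio_le(2)[OF c1])
  also have "\<dots> \<le> (1 + \<eta>) * walk1_p k (int a + 1)"
    unfolding \<eta>_def using aD k0 walk1_p_nonneg[of k "int a + 1"]
    by (intro mult_right_mono) (auto simp: divide_right_mono)
  finally have "walk1_p k (int a) / (1 + \<eta>) \<le> walk1_p k (int (Suc a))"
    using \<eta>0 by (simp add: divide_simps mult.commute add.commute)
  moreover have "walk1_p k 0 / (1 + \<eta>)^(Suc a) \<le> walk1_p k (int a) / (1 + \<eta>)"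
    using Suc.IH aD \<eta>0 by (simp add: \<eta>_def divide_simps mult.commute)
  ultimately show ?case unfolding \<eta>_def by linarith
qed

lemma walk1_p_0_lower: "k > 0 \<Longrightarrow> walk1_p k 0 \<ge> 1 / (2 * real k)"
proof -
  assume k: "k > 0"
  have "4^k / (2 * real k) \<le> real ((2*k) choose k)" by (rule central_binomial_lower_bound[OF k])
  then show ?thesis using k by (simp add: walk1_p_def divide_simps mult.commute)
qed

lemma walk1_p_lower:
  assumes kD: "2*(D+1) \<le> real k" and D0: "0 \<le> D" and zD: "\<bar>real_of_int z\<bar> \<le> D"
  shows "walk1_p k z \<ge> exp (- 4*D*(D+1)/real k) / (2 * real k)"
proof -
  define \<eta> where "\<eta> = 4*(D+1)/real k"
  have k0: "real k > 0" using kD D0 by simp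
  have eta0: "\<eta> \<ge> 0" using k0 D0 by (simp add: \<eta>_def)
  define a where "a = nat \<bar>z\<bar>"
  have aD: "real a \<le> D" using zD by (simp add: a_def)
  have za: "z = int a \<or> z = - int a" by (simp add: a_def) linarith
  have L: "walk1_p k z \<ge> walk1_p k 0 / (1+\<eta>)^a"
    using walk1_p_ge_walk1_p_0_div[OF kD aD] za walk1_p_minus[of k "int a"] unfolding \<eta>_def by auto
  have "(1+\<eta>)^a \<le> exp \<eta> ^ a" using eta0 by (intro power_mono) (auto simp: exp_ge_add_one_self add.commute)
  also have "\<dots> = exp (\<eta> * real a)" by (simp add: exp_of_nat_mult[symmetric] mult.commute)
  also have "\<dots> \<le> exp (\<eta> * D)" using eta0 aD by (simp add: mult_left_mono)
  finally have E: "(1+\<eta>)^a \<le> exp (\<eta> * D)" .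
  have "walk1_p k 0 / (1+\<eta>)^a \<ge> walk1_p k 0 / exp (\<eta> * D)"
    using E eta0 walk1_p_nonneg[of k 0] by (intro divide_left_mono) (auto intro: mult_pos_pos)
  moreover have "walk1_p k 0 / exp (\<eta> * D) \<ge> (1 / (2 * real k)) / exp (\<eta> * D)"
    using walk1_p_0_lower[of k] k0 by (intro divide_right_mono) auto
  moreover have "(1 / (2 * real k)) / exp (\<eta> * D) = exp (- 4*D*(D+1)/real k) / (2 * real k)"
  proof -
    have "exp (- 4*D*(D+1)/real k) * exp (\<eta> * D) = exp (- 4*D*(D+1)/real k + \<eta> * D)" by (rule exp_add[symmetric])
    also have "- 4*D*(D+1)/real k + \<eta> * D = 0" using k0 by (simp add: \<eta>_def field_simps)
    finally have ex: "exp (- 4*D*(D+1)/real k) * exp (\<eta> * D) = 1" by simp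
    have "exp (- 4*D*(D+1)/real k) = 1 / exp (\<eta> * D)" using ex by (simp add: field_simps)
    then show ?thesis by simp
  qed
  ultimately show ?thesis using L by linarith
qed

lemma walk1_p_lower_uniform:
  assumes D0: "0 \<le> D" and TD: "2*(D+1) \<le> T" and kT: "T \<le> real k" and kTmax: "real k \<le> Tmax"
    and zD: "\<bar>real_of_int z\<bar> \<le> D"
  shows "exp (-4*D*(D+1)/T) / (2*Tmax) \<le> walk1_p k z"
proof -
  have T0: "T > 0" using TD D0 by (smt (verit))
  have "exp (-4*D*(D+1)/T) \<le> exp (-4*D*(D+1)/real k)"
    using kT T0 D0 by (auto intro!: divide_left_mono mult_nonneg_nonneg)
  then have "exp (-4*D*(D+1)/T) / (2*Tmax) \<le> exp (-4*D*(D+1)/real k) / (2*Tmax)"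
    using kT kTmax T0 by (intro divide_right_mono) auto
  also have "\<dots> \<le> exp (-4*D*(D+1)/real k) / (2 * real k)"
    using kT kTmax T0 by (intro divide_left_mono) auto
  also have "\<dots> \<le> walk1_p k z" using walk1_p_lower[of D k z] TD kT D0 zD by auto
  finally show ?thesis .
qed

section \<open>Splitting off one coordinate\<close>

lemma real_CARD_ge_1: "1 \<le> real CARD('d::finite)"
  using finite_UNIV_card_ge_0[where 'a='d] by (simp add: Suc_le_eq[symmetric])

lemma unitv_nth: "unitv i $ j = (if j = i then 1 else 0)"
  by (simp add: unitv_def)

(* The lazy walk moving only in the coordinates in I, as a function of the displacement;
   the other coordinates are ignored. *)
fun walk_p_on :: "'d set \<Rightarrow> nat \<Rightarrow> int^'d \<Rightarrow> real" where
  "walk_p_on I 0 z = (if (\<forall>j\<in>I. z$j = 0) then 1 else 0)"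
| "walk_p_on I (Suc t) z = (if I = {} then walk_p_on I t z else
     walk_p_on I t z / 2 + (\<Sum>j\<in>I. walk_p_on I t (z + unitv j) + walk_p_on I t (z - unitv j)) / (4 * real (card I)))"

lemma walk_p_on_empty: "walk_p_on {} t z = 1"
  by (induction t) auto

lemma walk_p_on_nonneg: "0 \<le> walk_p_on I t z"
  by (induction t arbitrary: z) (auto intro!: sum_nonneg add_nonneg_nonneg divide_nonneg_nonneg)

lemma walk_p_on_le_1: "walk_p_on I t z \<le> 1"
proof (induction t arbitrary: z)
  case 0 then show ?case by simp
next
  case (Suc t)
  show ?case
  proof (cases "I = {}")
    case True then show ?thesis using Suc by simp
  next
    case False
    have cI: "card I > 0" using False by (simp add: card_gt_0_iff)
    have "(\<Sum>j\<in>I. walk_p_on I t (z + unitv j) + walk_p_on I t (z - unitv j)) \<le> (\<Sum>j\<in>I. 2)"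
      by (intro sum_mono) (smt (verit) Suc)
    also have "\<dots> = 2 * real (card I)" by simp
    finally have "(\<Sum>j\<in>I. walk_p_on I t (z + unitv j) + walk_p_on I t (z - unitv j)) / (4 * real (card I)) \<le> 1/2"
      using cI by (simp add: divide_simps)
    then show ?thesis using False Suc[of z] by simp
  qed
qed

lemma walk_p_on_cong: "(\<forall>j\<in>I. z$j = w$j) \<Longrightarrow> walk_p_on I t z = walk_p_on I t w"
proof (induction t arbitrary: z w)
  case 0 then show ?case by simp
next
  case (Suc t)
  have "walk_p_on I t z = walk_p_on I t w" using Suc by blast
  moreover have "\<And>j. walk_p_on I t (z + unitv j) = walk_p_on I t (w + unitv j)" "\<And>j. walk_p_on I t (z - unitv j) = walk_p_on I t (w - unitv j)"
    using Suc.prems by (auto intro!: Suc.IH)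
  ultimately show ?case by (simp add: walk_p_on_empty)
qed

lemma lazy_p_eq_walk_p_on: "lazy_p t x y = walk_p_on (UNIV::'d::finite set) t (x - y)"
proof (induction t arbitrary: x)
  case 0 then show ?case by (auto simp: vec_eq_iff)
next
  case (Suc t)
  have e1: "\<And>i. x + unitv i - y = (x - y) + unitv i" "\<And>i. x - unitv i - y = (x - y) - unitv i"
    by (simp_all add: algebra_simps)
  show ?case using Suc by (simp add: e1)
qed

lemma walk_p_on_Suc_scaled:
  fixes J :: "'d::finite set"
  assumes "c = real (card J) + 1"
  shows "(1 - 1/c) * walk_p_on J (Suc s) w
           = (1 - 1/c) * (walk_p_on J s w / 2)
             + (\<Sum>j\<in>J. walk_p_on J s (w + unitv j) + walk_p_on J s (w - unitv j)) / (4 * c)"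
proof (cases "J = {}")
  case True then show ?thesis using assms by simp
next
  case False
  have cJ: "card J > 0" using False by (simp add: card_gt_0_iff)
  define S where "S = (\<Sum>j\<in>J. walk_p_on J s (w + unitv j) + walk_p_on J s (w - unitv j))"
  have "1 - 1/c = real (card J) / c" using assms by (simp add: field_simps)
  then have "(1-1/c) * walk_p_on J (Suc s) w = (real (card J) / c) * (walk_p_on J s w / 2 + S / (4 * real (card J)))"
    using False by (simp add: S_def)
  also have "\<dots> = (real (card J) / c) * (walk_p_on J s w / 2) + (real (card J) / c) * (S / (4 * real (card J)))"
    by (simp add: distrib_left)
  also have "(real (card J) / c) * (S / (4 * real (card J))) = S / (4 * c)"
    using cJ False by simp
  finally show ?thesis using \<open>1 - 1/c = real (card J) / c\<close> by (simp add: S_def)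
qed

lemma walk_p_on_mixture_Suc:
  fixes J :: "'d::finite set"
  assumes c: "c = real (card J) + 1"
  shows "(1 - 1/c) * (walk1_p k x * walk_p_on J (Suc s) z) + 1/c * (walk1_p (Suc k) x * walk_p_on J s z)
    = walk1_p k x * walk_p_on J s z / 2 + (walk1_p k (x+1) + walk1_p k (x-1)) * walk_p_on J s z / (4*c)
      + walk1_p k x * (\<Sum>j\<in>J. walk_p_on J s (z + unitv j) + walk_p_on J s (z - unitv j)) / (4*c)"
proof -
  have c1: "1 \<le> c" using c by simp
  have "(1 - 1/c) * (walk1_p k x * walk_p_on J (Suc s) z) = walk1_p k x * ((1 - 1/c) * walk_p_on J (Suc s) z)"
    by simp
  also have "\<dots> = walk1_p k x * ((1 - 1/c) * (walk_p_on J s z / 2)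
      + (\<Sum>j\<in>J. walk_p_on J s (z + unitv j) + walk_p_on J s (z - unitv j)) / (4 * c))"
    by (simp only: walk_p_on_Suc_scaled[OF c])
  finally show ?thesis using c1 by (simp add: walk1_p_Suc field_simps)
qed

(* Among t moves, the number k made in direction i is Binomial(t, 1 / card (insert i J)). *)
lemma walk_p_on_insert:
  fixes J :: "'d::finite set"
  assumes iJ: "i \<notin> J"
  shows "walk_p_on (insert i J) t z
           = (\<Sum>k\<le>t. binomial_weight (1/(real (card J) + 1)) t k * (walk1_p k (z$i) * walk_p_on J (t-k) z))"
proof (induction t arbitrary: z)
  case 0
  have "walk1_p 0 (z$i) = (if z$i = 0 then 1 else 0)" by (simp add: walk1_p_def)
  then show ?case by auto
next
  case (Suc t)
  define c where "c = real (card J) + 1"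
  define q where "q = 1/c"
  let ?w = "binomial_weight q t"
  define F where "F = (\<lambda>w. \<Sum>k\<le>t. ?w k * (walk1_p k (w$i) * walk_p_on J (t-k) w))"
  define S where "S = (\<lambda>k. \<Sum>j\<in>J. walk_p_on J (t-k) (z + unitv j) + walk_p_on J (t-k) (z - unitv j))"
  define G where "G = (\<lambda>k. walk1_p k (z$i) * walk_p_on J (t-k) z / 2
     + (walk1_p k (z$i + 1) + walk1_p k (z$i - 1)) * walk_p_on J (t-k) z / (4*c)
     + walk1_p k (z$i) * S k / (4*c))"
  have c1: "c \<ge> 1" by (simp add: c_def)
  have IH: "walk_p_on (insert i J) t w = F w" for w using Suc by (simp add: F_def q_def c_def)
  have Fi: "F (z + unitv i) = (\<Sum>k\<le>t. ?w k * (walk1_p k (z$i + 1) * walk_p_on J (t-k) z))"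
    "F (z - unitv i) = (\<Sum>k\<le>t. ?w k * (walk1_p k (z$i - 1) * walk_p_on J (t-k) z))"
    unfolding F_def using iJ by (auto simp: unitv_nth intro!: sum.cong walk_p_on_cong)
  have "(\<Sum>j\<in>J. F (z + unitv j) + F (z - unitv j))
      = (\<Sum>j\<in>J. \<Sum>k\<le>t. ?w k * (walk1_p k (z$i) * (walk_p_on J (t-k) (z + unitv j) + walk_p_on J (t-k) (z - unitv j))))"
    unfolding F_def using iJ by (intro sum.cong refl) (auto simp: unitv_nth sum.distrib[symmetric] algebra_simps)
  also have "\<dots> = (\<Sum>k\<le>t. \<Sum>j\<in>J. ?w k * (walk1_p k (z$i) * (walk_p_on J (t-k) (z + unitv j) + walk_p_on J (t-k) (z - unitv j))))"
    by (rule sum.swap)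
  finally have FJ: "(\<Sum>j\<in>J. F (z + unitv j) + F (z - unitv j)) = (\<Sum>k\<le>t. ?w k * (walk1_p k (z$i) * S k))"
    by (simp add: S_def sum_distrib_left)
  have "(1-q) * (?w k * (walk1_p k (z$i) * walk_p_on J (Suc (t-k)) z))
          + q * (?w k * (walk1_p (Suc k) (z$i) * walk_p_on J (t-k) z))
        = ?w k * G k" for k
  proof -
    have "(1-q) * (?w k * (walk1_p k (z$i) * walk_p_on J (Suc (t-k)) z))
          + q * (?w k * (walk1_p (Suc k) (z$i) * walk_p_on J (t-k) z))
        = ?w k * ((1 - 1/c) * (walk1_p k (z$i) * walk_p_on J (Suc (t-k)) z)
          + 1/c * (walk1_p (Suc k) (z$i) * walk_p_on J (t-k) z))"
      by (simp only: q_def distrib_left mult.left_commute)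
    then show ?thesis by (simp only: walk_p_on_mixture_Suc[OF c_def] G_def S_def)
  qed
  then have mixture: "(1-q) * (\<Sum>k\<le>t. ?w k * (walk1_p k (z$i) * walk_p_on J (Suc (t-k)) z))
      + q * (\<Sum>k\<le>t. ?w k * (walk1_p (Suc k) (z$i) * walk_p_on J (t-k) z))
      = (\<Sum>k\<le>t. ?w k * G k)"
    by (simp add: sum_distrib_left sum.distrib[symmetric])
  have "walk_p_on (insert i J) (Suc t) z
      = F z / 2 + (F (z + unitv i) + F (z - unitv i) + (\<Sum>j\<in>J. F (z + unitv j) + F (z - unitv j))) / (4 * c)"
    using iJ by (simp add: IH c_def sum.insert)
  also have "\<dots> = (\<Sum>k\<le>t. ?w k * G k)"
    unfolding Fi FJ
    by (simp add: F_def G_def sum_divide_distrib sum.distrib[symmetric] algebra_simps,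
        intro sum.cong refl, use c1 in \<open>simp add: field_simps\<close>)
  also have "\<dots> = (\<Sum>k\<le>Suc t. binomial_weight q (Suc t) k * (walk1_p k (z$i) * walk_p_on J (Suc t - k) z))"
    unfolding mixture[symmetric] by (subst sum_binomial_weight_Suc) (simp add: Suc_diff_le)
  finally show ?case by (simp add: q_def c_def)
qed

(* With probability at least 1/2 the number k of moves in coordinate i and the number s - k of
   the others are both of order s / card I; on that event both factors of walk_p_on_insert are
   bounded below. Each split costs a factor 2 d in time, hence the condition on s. *)
lemma walk_p_on_lower:
  fixes I :: "'d::finite set"
  assumes D0: "0 \<le> D" and TD: "2*(D+1) \<le> T" and Te: "exp (-(1 - ln 2) * T) \<le> 1/4"
    and sT: "(2 * real CARD('d))^(card I) * T \<le> real s" and sTmax: "real s \<le> Tmax"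
    and zD: "\<forall>j\<in>I. \<bar>real_of_int (z$j)\<bar> \<le> D"
  shows "(exp (-4*D*(D+1)/T) / (4*Tmax))^(card I) \<le> walk_p_on I s z"
  using finite[of I] sT sTmax zD
proof (induction I arbitrary: s z rule: finite_induct)
  case empty then show ?case by (simp add: walk_p_on_empty)
next
  case (insert i J)
  define E where "E = exp (-4*D*(D+1)/T)"
  define c where "c = card J + 1"
  define q where "q = 1 / real c"
  define M where "M = 2 * real CARD('d)"
  have T0: "T > 0" using TD D0 by (smt (verit))
  have M1: "M \<ge> 1" using real_CARD_ge_1[where 'd='d] unfolding M_def by linarith
  have cM: "2 * real c \<le> M" using card_mono[of UNIV "insert i J"] insert.hyps by (simp add: c_def M_def)
  have q01: "0 \<le> q" "q \<le> 1" by (simp_all add: q_def c_def)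
  have "M * (M^card J * T) \<le> real s" using insert.prems(1) insert.hyps by (simp add: M_def c_def)
  then have "M^card J * T \<le> real s / M" using M1 by (simp add: field_simps)
  also have "\<dots> \<le> real s / (2 * real c)" using cM by (intro divide_left_mono) (auto simp: c_def)
  finally have key: "M^card J * T \<le> real s / (2 * real c)" .
  have TMT: "T \<le> M^card J * T" using M1 T0 by (simp add: one_le_power)
  have "0 < real s / (2 * real c)" using key TMT T0 by linarith
  then have Tmax0: "0 < Tmax" using insert.prems(2) by (simp add: c_def zero_less_divide_iff)
  have qs: "real s / (2 * real c) = q * real s / 2" by (simp add: q_def)
  have q'_s: "real s / (2 * real c) \<le> (1 - q) * real s / 2" if "J \<noteq> {}"
  proof -
    have "1 / real c \<le> 1 - q" using that insert.hyps by (simp add: q_def c_def card_gt_0_iff Suc_le_eq field_simps)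
    then have "(1 / real c) * real s \<le> (1 - q) * real s" by (rule mult_right_mono) simp
    then show ?thesis by simp
  qed
  define G where "G = {k. k \<le> s \<and> q * real s / 2 \<le> real k \<and> (1 - q) * real s / 2 \<le> real (s - k)}"
  have Tq: "T \<le> q * real s / 2" using key TMT qs by linarith
  have Tq': "T \<le> (1 - q) * real s / 2" if "q < 1"
  proof -
    have "J \<noteq> {}" using that by (auto simp: q_def c_def)
    then show ?thesis using key TMT q'_s by fastforce
  qed
  have G_mass: "1/2 \<le> sum (binomial_weight q s) G"
    unfolding G_def by (rule binomial_weight_central_mass[OF q01 Te Tq Tq'])
  define LJ where "LJ = (E / (4*Tmax))^(card J)"
  have term_lower: "(E / (2*Tmax)) * LJ \<le> walk1_p k (z$i) * walk_p_on J (s-k) z" if kG: "k \<in> G" for k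
  proof -
    have kT: "T \<le> real k" using kG key TMT qs by (auto simp: G_def)
    have "E / (2*Tmax) \<le> walk1_p k (z$i)"
      unfolding E_def using kG insert.prems kT by (intro walk1_p_lower_uniform[OF D0 TD]) (auto simp: G_def)
    moreover have "LJ \<le> walk_p_on J (s-k) z"
    proof (cases "J = {}")
      case True then show ?thesis by (simp add: LJ_def walk_p_on_empty)
    next
      case False
      have "(2 * real CARD('d))^(card J) * T \<le> real (s-k)"
        using kG key q'_s[OF False] by (auto simp: G_def M_def)
      then show ?thesis using insert.IH insert.prems kG unfolding LJ_def E_def by (auto simp: G_def)
    qed
    moreover have "0 \<le> E / (2*Tmax)" "0 \<le> LJ" using Tmax0 by (simp_all add: E_def LJ_def)
    ultimately show ?thesis by (intro mult_mono) auto
  qed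
  have "(E / (4*Tmax))^(card (insert i J)) = (1/2) * ((E / (2*Tmax)) * LJ)"
    using insert.hyps by (simp add: LJ_def)
  also have "\<dots> \<le> sum (binomial_weight q s) G * ((E / (2*Tmax)) * LJ)"
    using G_mass Tmax0 by (intro mult_right_mono) (auto simp: LJ_def E_def)
  also have "\<dots> = (\<Sum>k\<in>G. binomial_weight q s k * ((E / (2*Tmax)) * LJ))"
    by (rule sum_distrib_right)
  also have "\<dots> \<le> (\<Sum>k\<in>G. binomial_weight q s k * (walk1_p k (z$i) * walk_p_on J (s-k) z))"
    by (intro sum_mono mult_left_mono term_lower binomial_weight_nonneg[OF q01])
  also have "\<dots> \<le> (\<Sum>k\<le>s. binomial_weight q s k * (walk1_p k (z$i) * walk_p_on J (s-k) z))"
    by (intro sum_mono2) (auto simp: G_def binomial_weight_nonneg[OF q01] walk1_p_nonneg walk_p_on_nonneg)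
  also have "\<dots> = walk_p_on (insert i J) s z"
    using walk_p_on_insert[OF insert.hyps(2)] by (simp add: q_def c_def add.commute)
  finally show ?case by (simp add: E_def)
qed

lemma abs_sum_weighted_diff_le:
  fixes w a b c R :: "nat \<Rightarrow> real"
  assumes A: "finite A" "H \<subseteq> A" and w: "\<And>k. 0 \<le> w k" and R: "\<And>k. 0 \<le> R k"
    and c: "\<And>k. 0 \<le> c k" and ab: "\<And>k. k \<in> H \<Longrightarrow> \<bar>a k - b k\<bar> \<le> \<eta> * c k" and \<eta>: "0 \<le> \<eta>"
  shows "\<bar>\<Sum>k\<in>H. w k * ((a k - b k) * R k)\<bar> \<le> \<eta> * (\<Sum>k\<in>A. w k * (c k * R k))"
proof -
  have "\<bar>\<Sum>k\<in>H. w k * ((a k - b k) * R k)\<bar> \<le> (\<Sum>k\<in>H. \<bar>w k * ((a k - b k) * R k)\<bar>)"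
    by (rule sum_abs)
  also have "\<dots> \<le> (\<Sum>k\<in>H. w k * (\<eta> * c k * R k))"
  proof (rule sum_mono)
    fix k assume "k \<in> H"
    then have "\<bar>a k - b k\<bar> * R k \<le> \<eta> * c k * R k" using ab R by (intro mult_right_mono) auto
    then show "\<bar>w k * ((a k - b k) * R k)\<bar> \<le> w k * (\<eta> * c k * R k)"
      using w[of k] R[of k] by (simp add: abs_mult mult_left_mono)
  qed
  also have "\<dots> = \<eta> * (\<Sum>k\<in>H. w k * (c k * R k))" by (simp add: sum_distrib_left ac_simps)
  also have "\<dots> \<le> \<eta> * (\<Sum>k\<in>A. w k * (c k * R k))"
    using A w c R \<eta> by (intro mult_left_mono sum_mono2) auto
  finally show ?thesis .
qed

lemma abs_sum_weighted_diff_le_sum: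
  fixes w a b R :: "nat \<Rightarrow> real"
  assumes w: "\<And>k. 0 \<le> w k" and R: "\<And>k. 0 \<le> R k" "\<And>k. R k \<le> 1"
    and ab: "\<And>k. \<bar>a k - b k\<bar> \<le> 1"
  shows "\<bar>\<Sum>k\<in>H. w k * ((a k - b k) * R k)\<bar> \<le> (\<Sum>k\<in>H. w k)"
proof -
  have "\<bar>w k * ((a k - b k) * R k)\<bar> \<le> w k" for k
  proof -
    have "\<bar>a k - b k\<bar> * R k \<le> 1 * 1" using ab R by (intro mult_mono) auto
    then show ?thesis using w[of k] R(1)[of k] by (simp add: abs_mult mult_left_le)
  qed
  then show ?thesis by (metis (no_types) order_trans sum_abs sum_mono)
qed

lemma walk_p_on_UNIV_split:
  fixes z :: "int^'d::finite"
  shows "walk_p_on UNIV t (z + a *s unitv i) = (\<Sum>k\<le>t. binomial_weight (1 / real CARD('d)) t k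
           * (walk1_p k (z$i + a) * walk_p_on (UNIV - {i}) (t-k) z))"
proof -
  have cJ: "real (card (UNIV - {i})) + 1 = real CARD('d)"
    by (metis card_insert_disjoint finite Diff_iff insert_Diff_single insert_UNIV of_nat_Suc add.commute
        singletonI)
  have "walk_p_on UNIV t (z + a *s unitv i) = walk_p_on (insert i (UNIV - {i})) t (z + a *s unitv i)"
    by simp
  also have "\<dots> = (\<Sum>k\<le>t. binomial_weight (1 / real CARD('d)) t k
      * (walk1_p k (z$i + a) * walk_p_on (UNIV - {i}) (t-k) (z + a *s unitv i)))"
    by (subst walk_p_on_insert) (simp_all add: cJ unitv_nth)
  also have "\<dots> = (\<Sum>k\<le>t. binomial_weight (1 / real CARD('d)) t k
      * (walk1_p k (z$i + a) * walk_p_on (UNIV - {i}) (t-k) z))"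
    using walk_p_on_cong[of "UNIV - {i}" "z + a *s unitv i" z] by (simp add: unitv_nth)
  finally show ?thesis .
qed

(* The moves in coordinate i are split by their number k: for k below half its mean the binomial
   weight is exponentially small, above it the one-dimensional kernel has small increments. *)
lemma walk_p_increment:
  fixes z :: "int^'d::finite" and i :: 'd
  defines "d \<equiv> real CARD('d)"
  assumes D0: "0 \<le> D" and zD: "\<bar>real_of_int (z$i)\<bar> \<le> D" and tD: "4 * d * (D+1) \<le> real t"
  shows "\<bar>walk_p_on UNIV t (z + unitv i) - walk_p_on UNIV t z\<bar>
           \<le> (8*d*(D+1) / real t) * walk_p_on UNIV t z + exp (-(1 - ln 2) * real t / (2*d))"
    and "\<bar>walk_p_on UNIV t (z + unitv i) - walk_p_on UNIV t z\<bar>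
           \<le> (8*d*(D+1) / real t) * walk_p_on UNIV t (z + unitv i) + exp (-(1 - ln 2) * real t / (2*d))"
proof -
  have d1: "1 \<le> d" using real_CARD_ge_1 by (simp add: d_def)
  define q where "q = 1 / d"
  have q01: "0 \<le> q" "q \<le> 1" using d1 by (simp_all add: q_def)
  define \<eta> where "\<eta> = 8*d*(D+1) / real t"
  have "0 < 4 * d * (D+1)" using D0 d1 by simp
  then have t0: "real t > 0" using tD by linarith
  have \<eta>0: "0 \<le> \<eta>" using d1 D0 t0 by (simp add: \<eta>_def)
  let ?w = "binomial_weight q t"
  define R where "R = (\<lambda>k. walk_p_on (UNIV - {i}) (t-k) z)"
  have R01: "\<And>k. 0 \<le> R k" "\<And>k. R k \<le> 1" by (simp_all add: R_def walk_p_on_nonneg walk_p_on_le_1)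
  have w0: "\<And>k. 0 \<le> ?w k" using binomial_weight_nonneg[OF q01] by blast
  have rep0: "walk_p_on UNIV t z = (\<Sum>k\<le>t. ?w k * (walk1_p k (z$i) * R k))"
    using walk_p_on_UNIV_split[of t z 0 i] by (simp add: q_def d_def R_def)
  have rep1: "walk_p_on UNIV t (z + unitv i) = (\<Sum>k\<le>t. ?w k * (walk1_p k (z$i + 1) * R k))"
    using walk_p_on_UNIV_split[of t z 1 i] by (simp add: q_def d_def R_def)
  define Lo where "Lo = {k. k \<le> t \<and> real k < q * real t / 2}"
  define Hi where "Hi = {k. k \<le> t \<and> q * real t / 2 \<le> real k}"
  define f where "f = (\<lambda>k. ?w k * ((walk1_p k (z$i + 1) - walk1_p k (z$i)) * R k))"
  have "walk_p_on UNIV t (z + unitv i) - walk_p_on UNIV t z = sum f {..t}"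
    unfolding rep0 rep1 f_def by (simp add: sum_subtractf[symmetric] algebra_simps)
  also have "\<dots> = sum f Lo + sum f Hi"
  proof -
    have "{..t} = Lo \<union> Hi" "Lo \<inter> Hi = {}" "finite Lo" "finite Hi" by (auto simp: Lo_def Hi_def)
    then show ?thesis by (simp add: sum.union_disjoint)
  qed
  finally have split: "walk_p_on UNIV t (z + unitv i) - walk_p_on UNIV t z = sum f Lo + sum f Hi" .
  have "\<bar>sum f Lo\<bar> \<le> sum ?w Lo"
    unfolding f_def using w0 R01
    by (rule abs_sum_weighted_diff_le_sum) (rule abs_walk1_p_diff_le_1)
  also have "\<dots> \<le> exp (-(1 - ln 2) * real t / (2*d))"
    using binomial_weight_lower_tail[OF q01, of t] unfolding Lo_def by (simp add: q_def mult.commute)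
  finally have Lo_le: "\<bar>sum f Lo\<bar> \<le> exp (-(1 - ln 2) * real t / (2*d))" .
  have Hi_incr: "\<bar>walk1_p k (z$i + 1) - walk1_p k (z$i)\<bar> \<le> \<eta> * walk1_p k (z$i)"
    "\<bar>walk1_p k (z$i + 1) - walk1_p k (z$i)\<bar> \<le> \<eta> * walk1_p k (z$i + 1)" if "k \<in> Hi" for k
    using walk1_p_increment_large_k[OF D0 zD d1 tD] that unfolding \<eta>_def Hi_def q_def by auto
  have "\<bar>sum f Hi\<bar> \<le> \<eta> * walk_p_on UNIV t z" "\<bar>sum f Hi\<bar> \<le> \<eta> * walk_p_on UNIV t (z + unitv i)"
    unfolding f_def rep0 rep1
    by (rule abs_sum_weighted_diff_le; use Hi_incr w0 R01 walk1_p_nonneg \<eta>0 in \<open>auto simp: Hi_def\<close>)+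
  then show "\<bar>walk_p_on UNIV t (z + unitv i) - walk_p_on UNIV t z\<bar>
           \<le> (8*d*(D+1) / real t) * walk_p_on UNIV t z + exp (-(1 - ln 2) * real t / (2*d))"
    and "\<bar>walk_p_on UNIV t (z + unitv i) - walk_p_on UNIV t z\<bar>
           \<le> (8*d*(D+1) / real t) * walk_p_on UNIV t (z + unitv i) + exp (-(1 - ln 2) * real t / (2*d))"
    using split Lo_le unfolding \<eta>_def by linarith+
qed

section \<open>Harnack chains in a box\<close>

definition int_box :: "real \<Rightarrow> (int^'d::finite) set" where
  "int_box D = {v. \<forall>j. \<bar>real_of_int (v$j)\<bar> \<le> D}"

definition l1_norm :: "int^'d::finite \<Rightarrow> nat" where
  "l1_norm w = (\<Sum>j\<in>UNIV. nat \<bar>w$j\<bar>)"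

lemma int_box_mono: "D \<le> D' \<Longrightarrow> int_box D \<subseteq> int_box D'"
  unfolding int_box_def by (auto intro: order_trans)

lemma l1_norm_eq_0: "l1_norm w = 0 \<Longrightarrow> w = 0"
  by (auto simp: l1_norm_def vec_eq_iff)

lemma l1_norm_minus_commute: "l1_norm (z - z') = l1_norm (z' - z)"
  unfolding l1_norm_def by (intro sum.cong refl) (simp add: abs_minus_commute)

lemma real_l1_norm_le:
  fixes w :: "int^'d::finite"
  assumes "\<And>j. \<bar>real_of_int (w$j)\<bar> \<le> a"
  shows "real (l1_norm w) \<le> real CARD('d) * a"
proof -
  have "real (l1_norm w) = (\<Sum>j\<in>UNIV. \<bar>real_of_int (w$j)\<bar>)" by (simp add: l1_norm_def)
  also have "\<dots> \<le> (\<Sum>j\<in>(UNIV::'d set). a)" using assms by (intro sum_mono)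
  finally show ?thesis by simp
qed

lemma l1_norm_step:
  fixes w :: "int^'d::finite"
  assumes "w$j \<noteq> 0" "l1_norm w = Suc m"
  shows "l1_norm (w - sgn (w$j) *s unitv j) = m"
proof -
  define w1 where "w1 = w - sgn (w$j) *s unitv j"
  have o: "\<And>j'. j' \<noteq> j \<Longrightarrow> w1$j' = w$j'" by (simp add: w1_def unitv_nth)
  have jj: "nat \<bar>w1$j\<bar> + 1 = nat \<bar>w$j\<bar>" using assms(1)
    by (auto simp: w1_def unitv_nth sgn_if)
  have "l1_norm w = nat \<bar>w$j\<bar> + (\<Sum>j'\<in>UNIV - {j}. nat \<bar>w$j'\<bar>)" unfolding l1_norm_def
    by (simp add: sum.remove[of UNIV j])
  moreover have "l1_norm w1 = nat \<bar>w1$j\<bar> + (\<Sum>j'\<in>UNIV - {j}. nat \<bar>w$j'\<bar>)" unfolding l1_norm_def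
    by (simp add: sum.remove[of UNIV j] o)
  ultimately show ?thesis using assms(2) jj by (simp add: w1_def)
qed

lemma int_box_step_towards:
  fixes z w :: "int^'d::finite"
  assumes z: "z \<in> int_box D" and zw: "z + w \<in> int_box D" and j: "w$j \<noteq> 0"
  shows "z + sgn (w$j) *s unitv j \<in> int_box D"
  unfolding int_box_def mem_Collect_eq
proof
  fix j'
  show "\<bar>real_of_int ((z + sgn (w$j) *s unitv j)$j')\<bar> \<le> D"
  proof (cases "j' = j")
    case False then show ?thesis using z by (simp add: unitv_nth int_box_def)
  next
    case True
    have "\<bar>real_of_int (z$j)\<bar> \<le> D" "\<bar>real_of_int (z$j + w$j)\<bar> \<le> D"
      using z zw by (auto simp: int_box_def)
    moreover have "(z$j \<le> z$j + sgn (w$j) \<and> z$j + sgn (w$j) \<le> z$j + w$j) \<or>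
                   (z$j + w$j \<le> z$j + sgn (w$j) \<and> z$j + sgn (w$j) \<le> z$j)"
      using j by (auto simp: sgn_if)
    ultimately show ?thesis using True by (auto simp: unitv_nth abs_le_iff)
  qed
qed

lemma harnack_chain:
  fixes P :: "int^'d::finite \<Rightarrow> real"
  assumes \<theta>: "0 \<le> \<theta>" and P0: "\<And>v. 0 \<le> P v"
    and step: "\<And>v i. v \<in> int_box D \<Longrightarrow> v + unitv i \<in> int_box D \<Longrightarrow>
                 P (v + unitv i) \<le> (1+\<theta>) * P v \<and> P v \<le> (1+\<theta>) * P (v + unitv i)"
  shows "l1_norm w = m \<Longrightarrow> z \<in> int_box D \<Longrightarrow> z + w \<in> int_box D \<Longrightarrow> P (z + w) \<le> (1+\<theta>)^m * P z"
proof (induction m arbitrary: z w)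
  case 0
  then have "w = 0" by (simp add: l1_norm_eq_0)
  then show ?case by simp
next
  case (Suc m)
  have "w \<noteq> 0" using Suc.prems(1) by (auto simp: l1_norm_def)
  then obtain j where j: "w$j \<noteq> 0" by (metis vec_eq_iff zero_index)
  define z1 where "z1 = z + sgn (w$j) *s unitv j"
  have z1: "z1 \<in> int_box D" unfolding z1_def using Suc.prems(2,3) j by (rule int_box_step_towards)
  have zw: "z1 + (w - sgn (w$j) *s unitv j) = z + w" by (simp add: z1_def)
  have step1: "P z1 \<le> (1+\<theta>) * P z"
  proof (cases "w$j > 0")
    case True
    then have "z1 = z + unitv j" by (simp add: z1_def)
    then show ?thesis using step[of z j] Suc.prems(2) z1 by auto
  next
    case False
    then have "z = z1 + unitv j" using j by (simp add: z1_def sgn_if vec_eq_iff)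
    then show ?thesis using step[of z1 j] Suc.prems(2) z1 by auto
  qed
  have "P (z + w) \<le> (1+\<theta>)^m * P z1"
    using Suc.IH[OF l1_norm_step[OF j Suc.prems(1)] z1] Suc.prems(3) unfolding zw .
  also have "\<dots> \<le> (1+\<theta>)^m * ((1+\<theta>) * P z)" using step1 \<theta> by (intro mult_left_mono) auto
  finally show ?case by (simp add: ac_simps)
qed

lemma abs_diff_le_of_mutual_ratio:
  fixes a b x :: real
  assumes x: "1 \<le> x" and b: "0 \<le> b" and ab: "a \<le> x * b" and ba: "b \<le> x * a"
  shows "\<bar>a - b\<bar> \<le> (x - 1) * b"
proof -
  have "b / x \<le> a" using x ba by (simp add: divide_simps mult.commute)
  moreover have "(1 - 1/x) * b \<le> (x - 1) * b"
  proof (rule mult_right_mono[OF _ b])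
    have "(x - 1) / x \<le> (x - 1) / 1" using x by (intro divide_left_mono) auto
    then show "1 - 1/x \<le> x - 1" using x by (simp add: field_simps)
  qed
  ultimately show ?thesis using ab by (simp add: algebra_simps abs_le_iff)
qed

(* The relative change of the kernel under a unit step at time t (see harnack_theta_eq): the
   increment bound of the one-dimensional kernel plus the binomial tail exp (-(1 - ln 2) t / 2K)
   divided by the lower bound of walk_p_on_lower. The extra argument s >= t makes it monotone. *)
definition harnack_theta :: "nat \<Rightarrow> real \<Rightarrow> real \<Rightarrow> real \<Rightarrow> real" where
  "harnack_theta K D t s = 8 * real K * (D+1) / t
     + exp (-(1 - ln 2) * t / (2 * real K)) * (4 * s) ^ K * exp (4 * real K * (2 * real K)^K * D * (D+1) / t)"

lemma one_div_exp_div_power: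
  fixes c x :: real
  assumes "0 < c"
  shows "1 / (exp (- x) / c) ^ K = c ^ K * exp (real K * x)"
proof -
  have "1 / (exp (- x) / c) = c * exp x" using assms by (simp add: exp_minus field_simps)
  then show ?thesis by (simp add: power_one_over[symmetric] power_mult_distrib exp_of_nat_mult)
qed

lemma harnack_theta_eq:
  fixes D t :: real
  assumes t: "0 < t" and K: "1 \<le> K"
  shows "harnack_theta K D t t = 8 * real K * (D+1) / t
     + exp (-(1 - ln 2) * t / (2 * real K)) / (exp (-4*D*(D+1) / (t / (2 * real K)^K)) / (4 * t)) ^ K"
proof -
  have "1 / (exp (-4*D*(D+1) / (t / (2 * real K)^K)) / (4 * t)) ^ K
      = (4 * t) ^ K * exp (real K * (4*D*(D+1) / (t / (2 * real K)^K)))"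
    using t by (subst one_div_exp_div_power[symmetric]) simp_all
  also have "real K * (4*D*(D+1) / (t / (2 * real K)^K)) = 4 * real K * (2 * real K)^K * D * (D+1) / t"
    using t K by (simp add: field_simps)
  finally have inv: "1 / (exp (-4*D*(D+1) / (t / (2 * real K)^K)) / (4 * t)) ^ K
      = (4 * t) ^ K * exp (4 * real K * (2 * real K)^K * D * (D+1) / t)" .
  have "exp (-(1 - ln 2) * t / (2 * real K)) / (exp (-4*D*(D+1) / (t / (2 * real K)^K)) / (4 * t)) ^ K
      = exp (-(1 - ln 2) * t / (2 * real K)) * (1 / (exp (-4*D*(D+1) / (t / (2 * real K)^K)) / (4 * t)) ^ K)"
    by simp
  then show ?thesis unfolding inv by (simp add: harnack_theta_def mult.assoc)
qed

lemma walk_p_ratio_bound: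
  fixes z z' :: "int^'d::finite" and D :: real and t :: nat
  defines "d \<equiv> real CARD('d)"
  defines "T \<equiv> real t / (2 * d) ^ CARD('d)"
  defines "L \<equiv> (exp (-4*D*(D+1)/T) / (4 * real t)) ^ CARD('d)"
  defines "\<theta> \<equiv> harnack_theta CARD('d) D (real t) (real t)"
  assumes D0: "0 \<le> D" and zB: "z \<in> int_box D" "z' \<in> int_box D"
    and tD: "4 * d * (D+1) \<le> real t" and TD: "2*(D+1) \<le> T" and Te: "exp (-(1 - ln 2) * T) \<le> 1/4"
  shows "\<bar>walk_p_on UNIV t z' - walk_p_on UNIV t z\<bar> \<le> (exp (\<theta> * real (l1_norm (z' - z))) - 1) * walk_p_on UNIV t z"
proof -
  define P where "P = walk_p_on (UNIV::'d set) t"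
  have P0: "\<And>v. 0 \<le> P v" by (simp add: P_def walk_p_on_nonneg)
  have d1: "1 \<le> d" using real_CARD_ge_1 by (simp add: d_def)
  have "0 < 4 * d * (D+1)" using D0 d1 by simp
  then have t0: "real t > 0" using tD by linarith
  have L0: "L > 0" unfolding L_def using t0 by simp
  have \<theta>0: "\<theta> \<ge> 0" unfolding \<theta>_def harnack_theta_def using t0 D0 by (intro add_nonneg_nonneg) auto
  have lower: "L \<le> P v" if "v \<in> int_box D" for v
  proof -
    have "(2 * real CARD('d))^(card (UNIV::'d set)) * T = real t" by (simp add: T_def d_def)
    then show ?thesis using walk_p_on_lower[OF D0 TD Te, of UNIV t "real t" v] that
      unfolding P_def L_def int_box_def by auto
  qed
  define \<tau> where "\<tau> = exp (-(1 - ln 2) * real t / (2 * d))"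
  have \<tau>_le: "\<tau> \<le> (\<tau> / L) * P u" if "u \<in> int_box D" for u
  proof -
    have "\<tau> = (\<tau> / L) * L" using L0 by simp
    also have "\<dots> \<le> (\<tau> / L) * P u" using lower[OF that] L0 by (intro mult_left_mono) (auto simp: \<tau>_def)
    finally show ?thesis .
  qed
  have step: "P (v + unitv i) \<le> (1+\<theta>) * P v \<and> P v \<le> (1+\<theta>) * P (v + unitv i)"
    if v: "v \<in> int_box D" "v + unitv i \<in> int_box D" for v i
  proof -
    have "\<bar>real_of_int (v$i)\<bar> \<le> D" using v by (simp add: int_box_def)
    note incr = walk_p_increment[OF D0 this tD[unfolded d_def], folded d_def P_def \<tau>_def]
    define \<eta> where "\<eta> = 8 * d * (D+1) / real t"
    have "P (v + unitv i) \<le> P v + (\<eta> * P v + (\<tau> / L) * P v)"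
      using incr(1) \<tau>_le[OF v(1)] unfolding \<eta>_def \<tau>_def by linarith
    moreover have "P v \<le> P (v + unitv i) + (\<eta> * P (v + unitv i) + (\<tau> / L) * P (v + unitv i))"
      using incr(2) \<tau>_le[OF v(2)] unfolding \<eta>_def \<tau>_def by linarith
    moreover have "\<theta> = \<eta> + \<tau> / L"
      using harnack_theta_eq[OF t0, of "CARD('d)" D] real_CARD_ge_1[where 'd='d]
      unfolding \<theta>_def \<eta>_def \<tau>_def L_def T_def d_def by simp
    ultimately show ?thesis by (simp add: algebra_simps)
  qed
  define m where "m = l1_norm (z' - z)"
  have "P z' \<le> (1+\<theta>)^m * P z"
    using harnack_chain[OF \<theta>0 P0 step, where w="z' - z" and m=m and z=z] zB unfolding m_def by simp
  moreover have "P z \<le> (1+\<theta>)^m * P z'"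
    using harnack_chain[OF \<theta>0 P0 step, where w="z - z'" and m=m and z=z'] zB l1_norm_minus_commute[of z z']
    unfolding m_def by simp
  ultimately have "\<bar>P z' - P z\<bar> \<le> ((1+\<theta>)^m - 1) * P z"
    using \<theta>0 P0 by (intro abs_diff_le_of_mutual_ratio) (auto simp: one_le_power)
  also have "(1+\<theta>)^m \<le> exp (\<theta> * real m)"
    using \<theta>0 exp_ge_add_one_self[of \<theta>] power_mono[of "1+\<theta>" "exp \<theta>" m]
    by (simp add: exp_of_nat_mult[symmetric] mult.commute add.commute)
  then have "((1+\<theta>)^m - 1) * P z \<le> (exp (\<theta> * real m) - 1) * P z" using P0 by (intro mult_right_mono) auto
  finally show ?thesis unfolding P_def m_def .
qed

lemma harnack_theta_mono:
  assumes K: "1 \<le> K" and D0: "0 \<le> D" and t: "0 < t0" "t0 \<le> t" "t \<le> s"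
  shows "harnack_theta K D t t \<le> harnack_theta K D t0 s"
proof -
  define d where "d = real K"
  have d1: "1 \<le> d" using K by (simp add: d_def)
  have "8 * d * (D+1) / t \<le> 8 * d * (D+1) / t0" using t d1 D0 by (intro divide_left_mono) auto
  moreover have "exp (-(1 - ln 2) * t / (2 * d)) \<le> exp (-(1 - ln 2) * t0 / (2 * d))"
  proof -
    have "(1 - ln 2) * t0 \<le> (1 - ln 2) * t" using t ln_2_less_1 by (intro mult_left_mono) auto
    then have "(1 - ln 2) * t0 / (2 * d) \<le> (1 - ln 2) * t / (2 * d)" using d1 by (intro divide_right_mono) auto
    then have "-((1 - ln 2) * t / (2 * d)) \<le> -((1 - ln 2) * t0 / (2 * d))" by linarith
    then show ?thesis by (simp only: minus_mult_left minus_divide_left exp_le_cancel_iff)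
  qed
  moreover have "(4 * t) ^ K \<le> (4 * s) ^ K" using t by (intro power_mono) auto
  moreover have "exp (4 * d * (2*d)^K * D * (D+1) / t) \<le> exp (4 * d * (2*d)^K * D * (D+1) / t0)"
    using t d1 D0 by (auto intro!: divide_left_mono)
  moreover have "0 \<le> t" "0 \<le> s" using t by linarith+
  ultimately show ?thesis unfolding harnack_theta_def d_def[symmetric]
    by (intro add_mono mult_mono) auto
qed

section \<open>Choice of scales\<close>

(* For s = n and bt = 1 / delta, box_radius bounds N + A_n^2 sqrt n and min_time is eps_n n. *)
definition box_radius :: "real \<Rightarrow> real \<Rightarrow> real" where
  "box_radius bt s = (2 * s) powr bt + 100 * (ln (ln s))^2 * sqrt s"

definition min_time :: "real \<Rightarrow> real" where
  "min_time s = s / (10 * ln (ln s))"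

definition admissible_scale :: "nat \<Rightarrow> real \<Rightarrow> real \<Rightarrow> real \<Rightarrow> bool" where
  "admissible_scale K bt \<epsilon> s \<longleftrightarrow> 1 \<le> s \<and> 0 < ln (ln s)
     \<and> 4 * real K * (2 * real K)^K * (box_radius bt s + 1) \<le> min_time s
     \<and> exp (-(1 - ln 2) * min_time s / (2 * real K)^K) \<le> 1/4
     \<and> (2 * s) powr bt * (2 * real K) * harnack_theta K (box_radius bt s) (min_time s) s \<le> ln (1 + \<epsilon>)"

lemma tendsto_harnack_theta:
  assumes bt: "0 < bt" "bt < 1/2" and K: "1 \<le> K"
  shows "((\<lambda>s. (2 * s) powr bt * harnack_theta K (box_radius bt s) (min_time s) s) \<longlongrightarrow> 0) at_top"
proof -
  define d where "d = real K"
  define c where "c = (1 - ln 2) / (2 * d)"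
  define C where "C = 4 * d * (2 * d)^K"
  have pos: "0 < d" "0 < c" "0 < C" using K ln_2_less_1 by (simp_all add: d_def c_def C_def)
  have e: "-(1 - ln 2) * x / (2 * real K) = - c * x" for x
    using pos(1) by (simp add: c_def d_def field_simps)
  have "((\<lambda>s::real. (2 * s) powr bt * (8 * d * ((2 * s) powr bt + 100 * (ln (ln s))^2 * sqrt s + 1)
          / (s / (10 * ln (ln s)))
        + exp (- c * (s / (10 * ln (ln s)))) * (4 * s) powr d
          * exp (C * ((2 * s) powr bt + 100 * (ln (ln s))^2 * sqrt s)
                   * ((2 * s) powr bt + 100 * (ln (ln s))^2 * sqrt s + 1) / (s / (10 * ln (ln s))))))
        \<longlongrightarrow> 0) at_top"
    using bt pos by real_asymp
  moreover have "eventually (\<lambda>s. (2 * s) powr bt * (8 * d * ((2 * s) powr bt + 100 * (ln (ln s))^2 * sqrt s + 1)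
          / (s / (10 * ln (ln s)))
        + exp (- c * (s / (10 * ln (ln s)))) * (4 * s) powr d
          * exp (C * ((2 * s) powr bt + 100 * (ln (ln s))^2 * sqrt s)
                   * ((2 * s) powr bt + 100 * (ln (ln s))^2 * sqrt s + 1) / (s / (10 * ln (ln s)))))
      = (2 * s) powr bt * harnack_theta K (box_radius bt s) (min_time s) s) at_top"
    using eventually_gt_at_top[of 0] unfolding harnack_theta_def e
    by eventually_elim (simp add: box_radius_def min_time_def C_def d_def powr_realpow ac_simps)
  ultimately show ?thesis by (rule Lim_transform_eventually)
qed

lemma eventually_admissible_scale:
  assumes bt: "0 < bt" "bt < 1/2" and K: "1 \<le> K" and \<epsilon>: "0 < \<epsilon>"
  shows "eventually (admissible_scale K bt \<epsilon>) at_top"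
proof -
  define d where "d = real K"
  define M where "M = (2 * d)^K"
  define c where "c = 1 - ln (2::real)"
  have pos: "0 < d" "0 < c" "0 < M" using K ln_2_less_1 by (simp_all add: d_def M_def c_def)
  have "((\<lambda>s::real. ((2 * s) powr bt + 100 * (ln (ln s))^2 * sqrt s + 1) / (s / (10 * ln (ln s)))) \<longlongrightarrow> 0) at_top"
    using bt by real_asymp
  then have "eventually (\<lambda>s. (box_radius bt s + 1) / min_time s < 1 / (4 * d * M)) at_top"
    using pos by (auto dest!: order_tendstoD(2)[of _ 0 _ "1 / (4 * d * M)"]
        simp: box_radius_def min_time_def)
  moreover have "((\<lambda>s::real. exp (- c * (s / (10 * ln (ln s))) / M)) \<longlongrightarrow> 0) at_top"
    using pos by real_asymp
  then have "eventually (\<lambda>s. exp (-(1 - ln 2) * min_time s / M) < 1/4) at_top"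
    by (auto dest!: order_tendstoD(2)[of _ 0 _ "1/4"] simp: min_time_def c_def)
  moreover have "eventually (\<lambda>s. (2 * s) powr bt * harnack_theta K (box_radius bt s) (min_time s) s
                    < ln (1 + \<epsilon>) / (2 * d)) at_top"
    using tendsto_harnack_theta[OF bt K] pos \<epsilon> by (intro order_tendstoD(2)) auto
  moreover have "eventually (\<lambda>s::real. 0 < ln (ln s)) at_top" by real_asymp
  ultimately show ?thesis using eventually_ge_at_top[of 1]
  proof eventually_elim
    case (elim s)
    then have "0 < min_time s" by (simp add: min_time_def)
    with elim pos show ?case
      by (simp add: admissible_scale_def d_def M_def field_simps)
  qed
qed

lemma walk_p_ratio_le_eps:
  fixes z z' :: "int^'d::finite" and bt s :: real
  defines "K \<equiv> CARD('d)"
  defines "D \<equiv> box_radius bt s"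
  assumes adm: "admissible_scale K bt \<epsilon> s" and \<epsilon>: "0 < \<epsilon>"
    and t: "min_time s \<le> real t" "real t \<le> s"
    and z: "z \<in> int_box D" "z' \<in> int_box D"
    and l1: "real (l1_norm (z' - z)) \<le> 2 * real K * (2 * s) powr bt"
  shows "\<bar>walk_p_on UNIV t z' - walk_p_on UNIV t z\<bar> \<le> \<epsilon> * walk_p_on UNIV t z"
proof -
  define d where "d = real K"
  have K1: "1 \<le> K" and d1: "1 \<le> d" using real_CARD_ge_1[where 'd='d] by (simp_all add: K_def d_def)
  have s1: "1 \<le> s" and t0: "0 < min_time s" and cA: "4 * d * (2*d)^K * (D + 1) \<le> min_time s"
    and cE: "exp (-(1 - ln 2) * min_time s / (2*d)^K) \<le> 1/4"
    and cT: "(2 * s) powr bt * (2*d) * harnack_theta K D (min_time s) s \<le> ln (1 + \<epsilon>)"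
    using adm by (auto simp: admissible_scale_def min_time_def d_def D_def)
  have D0: "0 \<le> D" using s1 by (simp add: D_def box_radius_def)
  define M where "M = (2*d)^K"
  have M1: "1 \<le> M" unfolding M_def using d1 by (intro one_le_power) auto
  have "4 * d * (D+1) * M = 4 * d * (2*d)^K * (D + 1)" unfolding M_def by (simp only: ac_simps)
  then have A: "4 * d * (D+1) * M \<le> real t" using cA t by linarith
  have "4 * d * (D+1) * 1 \<le> 4 * d * (D+1) * M" using M1 d1 D0 by (intro mult_left_mono) auto
  then have tD: "4 * d * (D+1) \<le> real t" using A by linarith
  have "2 * (D+1) * M \<le> 4 * d * (D+1) * M" using M1 d1 D0 by (intro mult_right_mono) auto
  then have "2 * (D+1) * M \<le> real t" using A by linarith
  then have TD: "2 * (D+1) \<le> real t / M" using M1 by (simp add: pos_le_divide_eq)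
  have "(1 - ln 2) * min_time s / M \<le> (1 - ln 2) * real t / M"
    using t ln_2_less_1 M1 by (intro divide_right_mono mult_left_mono) auto
  then have "exp (-((1 - ln 2) * real t / M)) \<le> exp (-((1 - ln 2) * min_time s / M))" by simp
  also have "\<dots> = exp (-(1 - ln 2) * min_time s / (2*d)^K)"
    unfolding M_def by (metis minus_divide_left minus_mult_left)
  finally have "exp (-((1 - ln 2) * real t / M)) \<le> 1/4" using cE by linarith
  then have Te: "exp (-(1 - ln 2) * (real t / M)) \<le> 1/4" by (metis minus_mult_left times_divide_eq_right)
  define \<theta> where "\<theta> = harnack_theta K D (real t) (real t)"
  have ratio: "\<bar>walk_p_on UNIV t z' - walk_p_on UNIV t z\<bar> \<le> (exp (\<theta> * real (l1_norm (z' - z))) - 1) * walk_p_on UNIV t z"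
    unfolding \<theta>_def K_def
    by (rule walk_p_ratio_bound[OF D0 z tD[unfolded d_def K_def] TD[unfolded M_def d_def K_def]
          Te[unfolded M_def d_def K_def]])
  have \<theta>: "0 \<le> \<theta>" "\<theta> \<le> harnack_theta K D (min_time s) s"
    using harnack_theta_mono[OF K1 D0 t0 t] t0 t D0 by (auto simp: \<theta>_def harnack_theta_def)
  have "\<theta> * real (l1_norm (z' - z)) \<le> harnack_theta K D (min_time s) s * (2 * d * (2 * s) powr bt)"
    using \<theta> l1 by (intro mult_mono) (auto simp: d_def)
  also have "\<dots> \<le> ln (1 + \<epsilon>)" using cT by (simp add: ac_simps)
  finally have "exp (\<theta> * real (l1_norm (z' - z))) \<le> 1 + \<epsilon>" using \<epsilon> by (simp add: ln_ge_iff)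
  then show ?thesis using ratio walk_p_on_nonneg[of UNIV t z]
    by (smt (verit) mult_right_mono)
qed

section \<open>Back to the torus\<close>

lemma nN_ge: "1 < \<delta> \<Longrightarrow> N \<ge> 1 \<Longrightarrow> real (nN \<delta> N) \<ge> real N - 1"
proof -
  assume d: "1 < \<delta>" and N: "N \<ge> 1"
  have N1: "real N \<ge> 1" using N by simp
  have "real N powr 1 \<le> real N powr \<delta>" using d N1 by (intro powr_mono) auto
  then have x: "real N \<le> real N powr \<delta>" using N1 by simp
  have f: "real_of_int \<lfloor>real N powr \<delta>\<rfloor> > real N powr \<delta> - 1" by linarith
  have f0: "\<lfloor>real N powr \<delta>\<rfloor> \<ge> 0" by simp
  have "real (nN \<delta> N) = real_of_int \<lfloor>real N powr \<delta>\<rfloor>" using f0 by (simp add: nN_def)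
  then show ?thesis using f x by linarith
qed

lemma filterlim_nN: "1 < \<delta> \<Longrightarrow> filterlim (\<lambda>N. real (nN \<delta> N)) at_top sequentially"
proof -
  assume d: "1 < \<delta>"
  have "filterlim (\<lambda>N::nat. real N - 1) at_top sequentially" by real_asymp
  moreover have "eventually (\<lambda>N. real N - 1 \<le> real (nN \<delta> N)) sequentially"
    using eventually_ge_at_top[of "1::nat"] by eventually_elim (use nN_ge[OF d] in auto)
  ultimately show ?thesis by (rule filterlim_at_top_mono)
qed

lemma N_le_nN_root: "0 < \<delta> \<Longrightarrow> nN \<delta> N \<ge> 1 \<Longrightarrow> real N \<le> (2 * real (nN \<delta> N)) powr (1/\<delta>)"
proof -
  assume d: "0 < \<delta>" and n1: "nN \<delta> N \<ge> 1"
  have f: "real N powr \<delta> < real_of_int \<lfloor>real N powr \<delta>\<rfloor> + 1" by linarith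
  have f0: "\<lfloor>real N powr \<delta>\<rfloor> \<ge> 0" by simp
  have e: "real (nN \<delta> N) = real_of_int \<lfloor>real N powr \<delta>\<rfloor>" using f0 by (simp add: nN_def)
  have r1: "real (nN \<delta> N) \<ge> 1" using n1 by simp
  have "real N powr \<delta> \<le> 2 * real (nN \<delta> N)" using f e r1 by linarith
  then have "(real N powr \<delta>) powr (1/\<delta>) \<le> (2 * real (nN \<delta> N)) powr (1/\<delta>)"
    using d by (intro powr_mono2) auto
  moreover have "(real N powr \<delta>) powr (1/\<delta>) = real N" using d by (simp add: powr_powr)
  ultimately show ?thesis by simp
qed

lemma abs_component_le_znorm: "\<bar>real_of_int (v$j)\<bar> \<le> znorm v"
  using component_le_norm_cart[of "rv v" j] by (simp add: znorm_def rv_def)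

lemma abs_torus_le:
  assumes "b \<in> torus N"
  shows "\<bar>real_of_int (b$j)\<bar> \<le> real N"
proof -
  have "- real N / 2 \<le> real_of_int (b$j)" "real_of_int (b$j) < real N / 2"
    using assms by (auto simp: torus_def)
  then show ?thesis by linarith
qed

lemma phi_in_torus:
  assumes "0 < N"
  shows "phi N y \<in> torus N"
  unfolding torus_def mem_Collect_eq
proof
  fix i
  define r where "r = (y$i + int (N div 2)) mod int N"
  have r: "0 \<le> r" "r < int N" using assms by (simp_all add: r_def)
  have h1: "int N \<le> 2 * int (N div 2) + 1" and h2: "2 * int (N div 2) \<le> int N" by linarith+
  have "- int N \<le> 2 * (r - int (N div 2))" using r h2 by (simp add: algebra_simps)
  moreover have "2 * (r - int (N div 2)) < int N" using r h1 by (simp add: algebra_simps)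
  ultimately have "- real N \<le> 2 * real_of_int (r - int (N div 2))" "2 * real_of_int (r - int (N div 2)) < real N"
    by (metis of_int_le_iff of_int_minus of_int_mult of_int_numeral of_int_of_nat_eq,
        metis of_int_less_iff of_int_mult of_int_numeral of_int_of_nat_eq)
  then show "- real N / 2 \<le> real_of_int (phi N y $ i) \<and> real_of_int (phi N y $ i) < real N / 2"
    by (simp add: phi_def r_def)
qed

lemma add_mem_int_box:
  fixes p w :: "int^'d::finite"
  assumes "\<And>j. \<bar>real_of_int (p$j)\<bar> \<le> a" and "znorm w \<le> r"
  shows "p + w \<in> int_box (a + r)"
  unfolding int_box_def mem_Collect_eq
proof
  fix j
  have "\<bar>real_of_int ((p + w)$j)\<bar> \<le> \<bar>real_of_int (p$j)\<bar> + \<bar>real_of_int (w$j)\<bar>" by simp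
  then show "\<bar>real_of_int ((p + w)$j)\<bar> \<le> a + r"
    using assms(1)[of j] abs_component_le_znorm[of w j] assms(2) by linarith
qed

lemma lazy_p_ratio_le:
  fixes x y x' u' :: "int^'d::finite" and \<delta> \<epsilon> :: real and N n3 :: nat
  defines "n \<equiv> nN \<delta> N"
  assumes adm: "admissible_scale CARD('d) (1/\<delta>) \<epsilon> (real n)" and \<epsilon>: "0 < \<epsilon>" and \<delta>: "0 < \<delta>"
    and N: "1 \<le> N" and y: "znorm (int N *s x - y) \<le> (An n)^2 * sqrt (real n)"
    and n3: "epsn n * real n \<le> real n3" "n3 \<le> n"
    and x': "x' \<in> shiftset (torus N) x N" and u': "u' \<in> shiftset (torus N) x N"
  shows "\<bar>lazy_p n3 x' y - lazy_p n3 u' y\<bar> \<le> \<epsilon> * lazy_p n3 u' y"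
proof -
  define s where "s = real n"
  have "1 \<le> s" using adm by (simp add: admissible_scale_def s_def)
  then have "real N \<le> (2 * s) powr (1/\<delta>)" using N_le_nN_root[OF \<delta>] by (simp add: s_def n_def)
  then have box: "real N + (An n)^2 * sqrt s \<le> box_radius (1/\<delta>) s"
    by (simp add: box_radius_def An_def s_def power_mult_distrib)
  obtain p b where p: "p \<in> torus N" "x' = p + int N *s x" and b: "b \<in> torus N" "u' = b + int N *s x"
    using x' u' by (auto simp: shiftset_def)
  have "x' - y \<in> int_box (box_radius (1/\<delta>) s)" "u' - y \<in> int_box (box_radius (1/\<delta>) s)"
    using add_mem_int_box[OF abs_torus_le[OF p(1)] y] add_mem_int_box[OF abs_torus_le[OF b(1)] y]
      int_box_mono[OF box] p(2) b(2) by (auto simp: s_def add_diff_eq)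
  moreover have "real (l1_norm ((x' - y) - (u' - y))) \<le> 2 * real CARD('d) * (2 * s) powr (1/\<delta>)"
  proof -
    have "\<bar>real_of_int ((p - b)$j)\<bar> \<le> 2 * (2 * s) powr (1/\<delta>)" for j
      using abs_torus_le[OF p(1), of j] abs_torus_le[OF b(1), of j] \<open>real N \<le> _\<close> by simp
    then have "real (l1_norm (p - b)) \<le> real CARD('d) * (2 * (2 * s) powr (1/\<delta>))"
      by (rule real_l1_norm_le)
    then show ?thesis using p(2) b(2) by (simp add: ac_simps)
  qed
  moreover have "min_time s \<le> real n3" "real n3 \<le> s"
    using n3 by (simp_all add: epsn_def min_time_def s_def)
  ultimately have "\<bar>walk_p_on UNIV n3 (x' - y) - walk_p_on UNIV n3 (u' - y)\<bar> \<le> \<epsilon> * walk_p_on UNIV n3 (u' - y)"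
    using walk_p_ratio_le_eps[OF adm[folded s_def] \<epsilon>] by blast
  then show ?thesis by (simp add: lazy_p_eq_walk_p_on)
qed

theorem mainTheorem12:
  fixes m :: "nat \<Rightarrow> nat" and g :: "nat \<Rightarrow> real" and K :: "(int^'d) set"
    and A \<delta> \<zeta> C1 R :: real
  assumes d3: "CARD('d) \<ge> 3"
    and delta: "2 < \<delta>" "\<delta> < real CARD('d)"
      "2 * \<delta> > (real CARD('d))^2 / (real CARD('d) - 1)"
    and zeta: "0 < \<zeta>" "\<zeta> < \<delta> / real CARD('d)"
      "\<zeta> * (real CARD('d) - 2) > real CARD('d) - \<delta>"
    and C1: "C1 > 0"
    and A: "A > 0" "(\<lambda>N. (real (m N * N))^2 / real N ^ CARD('d)) \<longlonglongrightarrow> A"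
    and g: "filterlim g at_top sequentially"
    and K: "K \<subseteq> zball 0 R"
  shows "\<forall>\<epsilon>>0. \<exists>N0. \<forall>N\<ge>N0. \<forall>xx x0 \<tau> ys l x n3 x' u'.
      xx \<in> torus N \<and>
      tshift N xx ` phi N ` zball 0 R \<inter> phi N ` zball 0 (g N) = {} \<and>
      x0 \<in> tshift N xx ` phi N ` K \<and>
      (\<tau>, ys) \<in> goodG N (m N * N) \<delta> \<zeta> C1 x0 \<and>
      2 \<le> l \<and> l \<le> \<tau> \<and>
      znorm (ys l - ys (l - 1)) \<le> An (nN \<delta> N) * sqrt (real (nN \<delta> N)) \<and>
      x \<in> Gl N (nN \<delta> N) ys l \<and>
      epsn (nN \<delta> N) * real (nN \<delta> N) \<le> real n3 \<and> n3 \<le> nN \<delta> N \<and>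
      x' \<in> shiftset (tshift N xx ` phi N ` K) x N \<and>
      u' \<in> shiftset (torus N) x N
      \<longrightarrow> \<bar>lazy_p n3 x' (ys l) - lazy_p n3 u' (ys l)\<bar> \<le> \<epsilon> * lazy_p n3 u' (ys l)"
proof -
  \<comment> \<open>Only delta > 2 and d >= 1 are used: the estimate holds for every x with N x within A_n^2 sqrt n
    of y'_l, whatever the rest of the path and the position of K.\<close>
  have \<delta>0: "0 < \<delta>" using delta(1) by linarith
  have bt: "0 < 1/\<delta>" "1/\<delta> < 1/2" using delta(1) by (simp_all add: field_simps)
  have scale: "\<forall>\<epsilon>>0. \<forall>\<^sub>F N in sequentially. 1 \<le> N \<and> admissible_scale CARD('d) (1/\<delta>) \<epsilon> (real (nN \<delta> N))"
  proof (intro allI impI)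
    fix \<epsilon> :: real assume "0 < \<epsilon>"
    then have "eventually (admissible_scale CARD('d) (1/\<delta>) \<epsilon>) at_top"
      using eventually_admissible_scale[OF bt] d3 by simp
    then have "\<forall>\<^sub>F N in sequentially. admissible_scale CARD('d) (1/\<delta>) \<epsilon> (real (nN \<delta> N))"
      using filterlim_nN[of \<delta>] delta(1) by (auto simp: filterlim_iff)
    then show "\<forall>\<^sub>F N in sequentially. 1 \<le> N \<and> admissible_scale CARD('d) (1/\<delta>) \<epsilon> (real (nN \<delta> N))"
      using eventually_ge_at_top[of "1::nat"] by (simp add: eventually_conj)
  qed
  have torus: "x' \<in> shiftset (torus N) x N"
    if "1 \<le> N" "x' \<in> shiftset (tshift N xx ` phi N ` K) x N" for N xx x x'
    using phi_in_torus[of N] that by (auto simp: shiftset_def tshift_def)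
  show ?thesis
    unfolding eventually_sequentially[symmetric] Gl_def
    by (intro allI impI eventually_mono[OF scale[rule_format]])
      (auto intro!: lazy_p_ratio_le[OF _ _ \<delta>0] intro: torus)
qed

end
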